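(* Let $\mu_0,\mu_1\in\mathcal{P}_{2,c}(\mathbb{R})$ be in convex order, $\mu_0\le_{\mathsf{cx}}\mu_1$, and assume $\int|x|^q\,d\mu_1(x)<\infty$ for some $q>4$. Then ${\mathbb{D}}(\mu_0,\mu_1)<\infty$.
   Context: $\mathcal{P}_{2,c}(\mathbb{R})$ denotes the set of Borel probability measures $\mu$ on $\mathbb{R}$ with $\int|x|^2\,d\mu<\infty$ and $\int x\,d\mu(x)=0$. $\mu_0\le_{\mathsf{cx}}\mu_1$ means $\int\varphi\,d\mu_0\le\int\varphi\,d\mu_1$ for every convex $\varphi:\mathbb{R}\to\mathbb{R}$. The diffusive transport distance is $${\mathbb{D}}(\mu_0,\mu_1)^2=\inf\Big\{\int_0^1\int_{\mathbb{R}}\Big|\frac{d\omega_s}{d\mu_s}\Big|^2\,d\mu_s\,ds\Big\},$$ the infimum running over weakly continuous curves $(\mu_s)_{s\in[0,1]}$ in $\mathcal{P}_{2,c}(\mathbb{R})$ from $\mu_0$ to $\mu_1$ and measurable families $(\omega_s)$ of finite signed Radon measures (no sign condition) with $\partial_s\mu_s=\partial_{xx}\omega_s$ in the sense of distributions (inner integral $=+\infty$ if $\omega_s\not\ll\mu_s$). *)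

theory Defs
  imports "HOL-Probability.Probability"
begin

definition P2c :: "real measure \<Rightarrow> bool" where
  "P2c \<mu> \<longleftrightarrow> prob_space \<mu> \<and> sets \<mu> = sets borel \<and>
     (\<integral>\<^sup>+ x. ennreal (x\<^sup>2) \<partial>\<mu>) < \<infinity> \<and>
     integral\<^sup>L \<mu> (\<lambda>x. x) = 0"

text \<open>For convex phi (bounded below by an affine function) the
  integral against a measure with finite first moment is well defined in
  (-infinity, +infinity]; the inequality is trivial when the right-hand side is
  +infinity, and otherwise it forces the left-hand side to be finite.\<close>
definition cx_le :: "real measure \<Rightarrow> real measure \<Rightarrow> bool" where
  "cx_le \<mu>0 \<mu>1 \<longleftrightarrow> (\<forall>\<phi> :: real \<Rightarrow> real. convex_on UNIV \<phi> \<longrightarrow>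
      integrable \<mu>1 \<phi> \<longrightarrow> (integrable \<mu>0 \<phi> \<and> integral\<^sup>L \<mu>0 \<phi> \<le> integral\<^sup>L \<mu>1 \<phi>))"

text \<open>Partial derivative: True = in the time variable s, False = in space x.\<close>
definition pd :: "bool \<Rightarrow> (real \<Rightarrow> real \<Rightarrow> real) \<Rightarrow> (real \<Rightarrow> real \<Rightarrow> real)" where
  "pd b f = (if b then (\<lambda>s x. deriv (\<lambda>t. f t x) s) else (\<lambda>s x. deriv (\<lambda>y. f s y) x))"

definition iter_pd :: "bool list \<Rightarrow> (real \<Rightarrow> real \<Rightarrow> real) \<Rightarrow> (real \<Rightarrow> real \<Rightarrow> real)" where
  "iter_pd ds f = foldr pd ds f"

definition smooth2 :: "(real \<Rightarrow> real \<Rightarrow> real) \<Rightarrow> bool" where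
  "smooth2 f \<longleftrightarrow> (\<forall>ds. continuous_on UNIV (\<lambda>(s, x). iter_pd ds f s x) \<and>
      (\<forall>s x. (\<lambda>t. iter_pd ds f t x) differentiable (at s) \<and>
             (\<lambda>y. iter_pd ds f s y) differentiable (at x)))"

definition test_fun :: "(real \<Rightarrow> real \<Rightarrow> real) \<Rightarrow> bool" where
  "test_fun \<phi> \<longleftrightarrow> smooth2 \<phi> \<and>
     compact (closure {(s, x). \<phi> s x \<noteq> 0}) \<and>
     closure {(s, x). \<phi> s x \<noteq> 0} \<subseteq> {0<..<1} \<times> UNIV"

text \<open>A finite signed (Radon) measure on R is represented by a pair (P, N) of
  finite Borel measures, omega(A) = P(A) - N(A) (Jordan decomposition).\<close>
definition fin_borel :: "real measure \<Rightarrow> bool" where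
  "fin_borel P \<longleftrightarrow> finite_measure P \<and> sets P = sets borel"

definition sm_val :: "real measure \<times> real measure \<Rightarrow> real set \<Rightarrow> real" where
  "sm_val \<omega> A = measure (fst \<omega>) A - measure (snd \<omega>) A"

definition sm_int :: "real measure \<times> real measure \<Rightarrow> (real \<Rightarrow> real) \<Rightarrow> real" where
  "sm_int \<omega> f = integral\<^sup>L (fst \<omega>) f - integral\<^sup>L (snd \<omega>) f"

text \<open>int |d omega / d mu|^2 d mu, and +infinity if omega is not absolutely
  continuous w.r.t. mu (INF of the empty set is top).\<close>
definition action :: "real measure \<Rightarrow> real measure \<times> real measure \<Rightarrow> ennreal" where
  "action \<mu> \<omega> = (INF w \<in> {w. w \<in> borel_measurable borel \<and> integrable \<mu> w \<and>
        (\<forall>A \<in> sets borel. sm_val \<omega> A = (\<integral>x\<in>A. w x \<partial>\<mu>))}.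
        \<integral>\<^sup>+ x. ennreal ((w x)\<^sup>2) \<partial>\<mu>)"

definition admissible ::
  "real measure \<Rightarrow> real measure \<Rightarrow> (real \<Rightarrow> real measure) \<Rightarrow> (real \<Rightarrow> real measure \<times> real measure) \<Rightarrow> bool" where
  "admissible \<mu>0 \<mu>1 \<mu> \<omega> \<longleftrightarrow>
     (\<forall>s\<in>{0..1}. P2c (\<mu> s)) \<and> \<mu> 0 = \<mu>0 \<and> \<mu> 1 = \<mu>1 \<and>
     (\<forall>f :: real \<Rightarrow> real. continuous_on UNIV f \<longrightarrow> bounded (range f) \<longrightarrow>
         continuous_on {0..1} (\<lambda>s. integral\<^sup>L (\<mu> s) f)) \<and>
     (\<forall>s\<in>{0..1}. fin_borel (fst (\<omega> s)) \<and> fin_borel (snd (\<omega> s))) \<and>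
     (\<forall>A\<in>sets borel. (\<lambda>s. sm_val (\<omega> s) A) \<in> borel_measurable (restrict_space borel {0..1})) \<and>
     (\<forall>\<phi>. test_fun \<phi> \<longrightarrow>
         set_integrable lborel {0..1} (\<lambda>s. integral\<^sup>L (\<mu> s) (\<lambda>x. pd True \<phi> s x)) \<and>
         set_integrable lborel {0..1} (\<lambda>s. sm_int (\<omega> s) (\<lambda>x. pd False (pd False \<phi>) s x)) \<and>
         (\<integral>s\<in>{0..1}. integral\<^sup>L (\<mu> s) (\<lambda>x. pd True \<phi> s x) \<partial>lborel) +
         (\<integral>s\<in>{0..1}. sm_int (\<omega> s) (\<lambda>x. pd False (pd False \<phi>) s x) \<partial>lborel) = 0)"

definition diffusive_sq :: "real measure \<Rightarrow> real measure \<Rightarrow> ennreal" where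
  "diffusive_sq \<mu>0 \<mu>1 = (INF p \<in> {(\<mu>, \<omega>). admissible \<mu>0 \<mu>1 \<mu> \<omega>}.
      \<integral>\<^sup>+ s\<in>{0..1}. action (fst p s) (snd p s) \<partial>lborel)"

definition diffusive_dist :: "real measure \<Rightarrow> real measure \<Rightarrow> ennreal" where
  "diffusive_dist \<mu>0 \<mu>1 = (if diffusive_sq \<mu>0 \<mu>1 = \<infinity> then \<infinity>
      else ennreal (sqrt (enn2real (diffusive_sq \<mu>0 \<mu>1))))"

end

theory Submission
  imports Defs
begin

text \<open>Connect \<mu>0 to \<mu>1 by the curve alpha s \<cdot> \<mu>0 + beta s \<cdot> eta + gamma s \<cdot> \<mu>1, where eta
  has the symmetric density proportional to (1 + |x|) powr -p with p = (3q - 2)/2, and the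
  polynomial weights satisfy alpha + beta + gamma = 1 and alpha'^2, gamma'^2 \<le> 24 beta.
  The call function C(\<nu>, x) = \<integral> max 0 (y - x) d\<nu>(y) has second derivative \<nu>, so the flux
  alpha' (C(\<mu>0) - C(eta)) + gamma' (C(\<mu>1) - C(eta)) solves the continuity equation.
  The convex order and the q-th moment of \<mu>1 make both differences of call functions
  O((1 + |x|) powr (1 - q)). Since the curve dominates beta s \<cdot> eta, its action is at most
  48 \<integral> ((C(\<mu>0) - C(eta))^2 + (C(\<mu>1) - C(eta))^2) / eta, which is finite because
  2(q - 1) - p > 1, i.e. q > 4.\<close>

lemma integrable_dominated:
  fixes f g :: "'a \<Rightarrow> real"
  assumes "integrable M g" "f \<in> borel_measurable M" "\<And>x. \<bar>f x\<bar> \<le> g x"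
  shows "integrable M f"
  by (rule Bochner_Integration.integrable_bound[OF assms(1,2)])
     (use assms(3) in \<open>auto intro: order_trans[OF _ abs_ge_self]\<close>)

lemma set_integrable_01_if_bounded:
  fixes f :: "real \<Rightarrow> real"
  assumes "f \<in> borel_measurable borel" "\<And>s. s \<in> {0..1} \<Longrightarrow> \<bar>f s\<bar> \<le> K"
  shows "set_integrable lborel {0..1} f"
  unfolding set_integrable_def
proof (rule integrable_dominated)
  show "integrable lborel (\<lambda>s::real. K * indicat_real {0..1} s)"
    by (intro integrable_mult_right integrable_real_indicator) auto
  show "\<bar>indicat_real {0..1} s *\<^sub>R f s\<bar> \<le> K * indicat_real {0..1} s" for s
    using assms(2)[of s] by (cases "s \<in> {0..1}") auto
qed (use assms(1) in measurable)

lemma integrable_density_iff_mult: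
  fixes f h :: "real \<Rightarrow> real"
  assumes "h \<in> borel_measurable M" "\<And>x. h x \<ge> 0" "f \<in> borel_measurable M"
  shows "integrable (density M (\<lambda>x. ennreal (h x))) f \<longleftrightarrow> integrable M (\<lambda>x. h x * f x)"
    and "integral\<^sup>L (density M (\<lambda>x. ennreal (h x))) f = (\<integral>x. h x * f x \<partial>M)"
  using integrable_density[of f M h] integral_density[of f M h] assms by auto

lemma measurable_pair_measure_cong_sets:
  assumes "sets N = sets borel" "sets \<nu> = sets borel" "f \<in> borel_measurable (borel \<Otimes>\<^sub>M borel)"
  shows "f \<in> borel_measurable (N \<Otimes>\<^sub>M \<nu>)"
  using assms(3) measurable_cong_sets[OF sets_pair_measure_cong[OF assms(1,2)] refl] by blast

lemma integrable_pair_if_bounded_on_strip: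
  fixes g :: "real \<times> real \<Rightarrow> real"
  assumes \<nu>: "finite_measure \<nu>" "sets \<nu> = sets borel" and g: "g \<in> borel_measurable (lborel \<Otimes>\<^sub>M \<nu>)"
    and bound: "\<And>s x. \<bar>g (s, x)\<bar> \<le> K * indicator {0..1} s"
  shows "integrable (lborel \<Otimes>\<^sub>M \<nu>) g"
proof (rule integrable_dominated[OF _ g])
  interpret finite_measure \<nu> by fact
  have space: "space \<nu> = UNIV" using sets_eq_imp_space_eq[OF \<nu>(2)] by simp
  have "emeasure (lborel \<Otimes>\<^sub>M \<nu>) ({0..1::real} \<times> space \<nu>) = emeasure lborel {0..1::real} * emeasure \<nu> (space \<nu>)"
    by (rule emeasure_pair_measure_Times) auto
  then have "emeasure (lborel \<Otimes>\<^sub>M \<nu>) ({0..1::real} \<times> space \<nu>) < \<infinity>"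
    by (simp add: ennreal_mult_less_top less_top[symmetric])
  then show "integrable (lborel \<Otimes>\<^sub>M \<nu>) (\<lambda>p. K * indicator ({0..1::real} \<times> space \<nu>) p)"
    by (intro integrable_mult_right integrable_real_indicator) auto
  show "\<bar>g p\<bar> \<le> K * indicator ({0..1} \<times> space \<nu>) p" for p
    using bound[of "fst p" "snd p"] by (cases p) (simp add: space indicator_def mem_Times_iff)
qed

lemma deriv_eq_0_if_locally_0:
  fixes f :: "real \<Rightarrow> real"
  assumes "open S" "y \<in> S" "\<And>z. z \<in> S \<Longrightarrow> f z = 0"
  shows "deriv f y = 0"
proof -
  have "(f has_field_derivative 0) (at y)"
    by (rule has_field_derivative_transform_within_open[of "\<lambda>_. 0", OF _ assms(1,2)])
       (use assms(3) in auto)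
  then show ?thesis by (rule DERIV_imp_deriv)
qed

lemma continuous_on_slice_snd:
  fixes f :: "real \<Rightarrow> real \<Rightarrow> real"
  shows "continuous_on UNIV (\<lambda>(s, x). f s x) \<Longrightarrow> continuous_on UNIV (f s)"
  by (rule continuous_on_compose2[of UNIV "\<lambda>(s, x). f s x" UNIV "\<lambda>x. (s, x)", simplified])
     (auto intro!: continuous_intros)

lemma continuous_on_slice_fst:
  fixes f :: "real \<Rightarrow> real \<Rightarrow> real"
  shows "continuous_on UNIV (\<lambda>(s, x). f s x) \<Longrightarrow> continuous_on UNIV (\<lambda>s. f s x)"
  by (rule continuous_on_compose2[of UNIV "\<lambda>(s, x). f s x" UNIV "\<lambda>s. (s, x)", simplified])
     (auto intro!: continuous_intros)

lemma bounded_on_01: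
  fixes f :: "real \<Rightarrow> real"
  assumes "continuous_on {0..1} f"
  obtains K where "K \<ge> 0" "\<And>s. s \<in> {0..1} \<Longrightarrow> \<bar>f s\<bar> \<le> K"
proof -
  obtain K where "K > 0" "\<And>y. y \<in> f ` {0..1} \<Longrightarrow> norm y \<le> K"
    using compact_imp_bounded[OF compact_continuous_image[OF assms compact_Icc]] bounded_pos by metis
  then show thesis using that[of K] by auto
qed

lemma bounded_on_strip_if_vanishing_far:
  fixes f :: "real \<Rightarrow> real \<Rightarrow> real"
  assumes cont: "continuous_on UNIV (\<lambda>(s, x). f s x)" and far: "\<And>s x. R < \<bar>x\<bar> \<Longrightarrow> f s x = 0"
  obtains B where "B > 0" "\<And>s x. s \<in> {0..1} \<Longrightarrow> \<bar>f s x\<bar> \<le> B"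
proof -
  have "compact ((\<lambda>(s, x). f s x) ` ({0..1} \<times> {-R..R}))"
    by (rule compact_continuous_image[OF continuous_on_subset[OF cont]]) (auto intro: compact_Times)
  then obtain B where B: "B > 0" "\<And>y. y \<in> (\<lambda>(s, x). f s x) ` ({0..1} \<times> {-R..R}) \<Longrightarrow> norm y \<le> B"
    using compact_imp_bounded bounded_pos by metis
  have "\<bar>f s x\<bar> \<le> B" if s: "s \<in> {0..1}" for s x
  proof (cases "R < \<bar>x\<bar>")
    case False
    then have "f s x \<in> (\<lambda>(s, x). f s x) ` ({0..1} \<times> {-R..R})"
      using s by (intro image_eqI[of _ _ "(s, x)"]) auto
    then show ?thesis using B(2) by fastforce
  qed (use far B in simp)
  then show thesis using B(1) that by blast
qed

lemma iter_pd_simps [simp]: "iter_pd [] f = f" "iter_pd (b # ds) f = pd b (iter_pd ds f)"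
  by (simp_all add: iter_pd_def)

locale test_function =
  fixes \<phi> :: "real \<Rightarrow> real \<Rightarrow> real"
  assumes test_fun: "test_fun \<phi>"
begin

definition "phi_t = pd True \<phi>"
definition "phi_x = pd False \<phi>"
definition "phi_xx = pd False (pd False \<phi>)"

lemma smooth: "smooth2 \<phi>"
  using test_fun[unfolded test_fun_def] by (simp only:)

lemma continuous_on_phi: "continuous_on UNIV (\<lambda>(s, x). \<phi> s x)"
  and continuous_on_phi_t: "continuous_on UNIV (\<lambda>(s, x). phi_t s x)"
  and continuous_on_phi_xx: "continuous_on UNIV (\<lambda>(s, x). phi_xx s x)"
  using smooth[unfolded smooth2_def, rule_format, of "[]"] smooth[unfolded smooth2_def, rule_format, of "[True]"]
    smooth[unfolded smooth2_def, rule_format, of "[False, False]"]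
  by (simp_all add: phi_t_def phi_xx_def)

lemma phi_has_time_derivative: "((\<lambda>t. \<phi> t x) has_real_derivative phi_t s x) (at s)"
  using smooth[unfolded smooth2_def, rule_format, of "[]"]
  by (simp add: phi_t_def pd_def DERIV_deriv_iff_real_differentiable)

lemma phi_has_space_derivative: "(\<phi> s has_real_derivative phi_x s x) (at x)"
  using smooth[unfolded smooth2_def, rule_format, of "[]"]
  by (simp add: phi_x_def pd_def DERIV_deriv_iff_real_differentiable)

lemma phi_x_has_space_derivative: "(phi_x s has_real_derivative phi_xx s x) (at x)"
  using smooth[unfolded smooth2_def, rule_format, of "[False]"]
  by (simp add: phi_x_def phi_xx_def pd_def[of False "pd False \<phi>"] DERIV_deriv_iff_real_differentiable)

lemma support_in_strip: "closure {(s, x). \<phi> s x \<noteq> 0} \<subseteq> {0<..<1} \<times> UNIV"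
  and compact_support: "compact (closure {(s, x). \<phi> s x \<noteq> 0})"
  using test_fun[unfolded test_fun_def] by (simp_all only:)

lemma phi_eq_0_outside_01:
  assumes "s \<le> 0 \<or> 1 \<le> s" shows "\<phi> s x = 0"
proof (rule ccontr)
  assume "\<phi> s x \<noteq> 0"
  then have "(s, x) \<in> closure {(s, x). \<phi> s x \<noteq> 0}" by (simp add: closure_def)
  then have "s \<in> {0<..<1}" using support_in_strip by blast
  then show False using assms by simp
qed

lemma phi_vanishes_far: "\<exists>R>0. \<forall>s x. R < \<bar>x\<bar> \<longrightarrow> \<phi> s x = 0"
proof -
  obtain R where R: "R > 0" "\<And>z. z \<in> closure {(s, x). \<phi> s x \<noteq> 0} \<Longrightarrow> norm z \<le> R"
    using compact_imp_bounded[OF compact_support] bounded_pos by metis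
  have "\<phi> s x = 0" if "R < \<bar>x\<bar>" for s x
  proof (rule ccontr)
    assume "\<phi> s x \<noteq> 0"
    then have "(s, x) \<in> closure {(s, x). \<phi> s x \<noteq> 0}" by (simp add: closure_def)
    then have "norm (s, x) \<le> R" by (rule R(2))
    moreover have "\<bar>x\<bar> \<le> norm (s, x)" by (metis norm_snd_le real_norm_def snd_conv)
    ultimately show False using that by linarith
  qed
  then show ?thesis using R(1) by blast
qed

definition "radius = (SOME R. R > 0 \<and> (\<forall>s x. R < \<bar>x\<bar> \<longrightarrow> \<phi> s x = 0))"

lemma radius_pos: "radius > 0" and phi_eq_0_far: "radius < \<bar>x\<bar> \<Longrightarrow> \<phi> s x = 0"
  using someI_ex[OF phi_vanishes_far] unfolding radius_def by auto

lemma phi_t_eq_0_far: "radius < \<bar>x\<bar> \<Longrightarrow> phi_t s x = 0"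
  unfolding phi_t_def pd_def by (auto intro!: deriv_eq_0_if_locally_0[of UNIV] simp: phi_eq_0_far)

lemma phi_x_eq_0_far: "radius < \<bar>x\<bar> \<Longrightarrow> phi_x s x = 0"
  unfolding phi_x_def pd_def
  by (auto intro!: deriv_eq_0_if_locally_0[of "{z. radius < \<bar>z\<bar>}"] open_Collect_less continuous_intros
      simp: phi_eq_0_far)

lemma phi_xx_eq_0_far: "radius < \<bar>x\<bar> \<Longrightarrow> phi_xx s x = 0"
  using phi_x_eq_0_far unfolding phi_xx_def pd_def[of False "pd False \<phi>"] phi_x_def
  by (auto intro!: deriv_eq_0_if_locally_0[of "{z. radius < \<bar>z\<bar>}"] open_Collect_less continuous_intros)

lemma phi_bounded: "\<exists>B>0. \<forall>s\<in>{0..1}. \<forall>x. \<bar>\<phi> s x\<bar> \<le> B \<and> \<bar>phi_t s x\<bar> \<le> B \<and> \<bar>phi_xx s x\<bar> \<le> B"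
proof -
  obtain B1 where B1: "B1 > 0" "\<And>s x. s \<in> {0..1} \<Longrightarrow> \<bar>\<phi> s x\<bar> \<le> B1"
    using bounded_on_strip_if_vanishing_far[OF continuous_on_phi phi_eq_0_far] by blast
  obtain B2 where B2: "B2 > 0" "\<And>s x. s \<in> {0..1} \<Longrightarrow> \<bar>phi_t s x\<bar> \<le> B2"
    using bounded_on_strip_if_vanishing_far[OF continuous_on_phi_t phi_t_eq_0_far] by blast
  obtain B3 where B3: "B3 > 0" "\<And>s x. s \<in> {0..1} \<Longrightarrow> \<bar>phi_xx s x\<bar> \<le> B3"
    using bounded_on_strip_if_vanishing_far[OF continuous_on_phi_xx phi_xx_eq_0_far] by blast
  have "\<bar>\<phi> s x\<bar> \<le> B1 + B2 + B3 \<and> \<bar>phi_t s x\<bar> \<le> B1 + B2 + B3 \<and> \<bar>phi_xx s x\<bar> \<le> B1 + B2 + B3"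
    if "s \<in> {0..1}" for s x
    using B1(2)[OF that, of x] B2(2)[OF that, of x] B3(2)[OF that, of x] B1(1) B2(1) B3(1) by linarith
  then show ?thesis using B1(1) B2(1) B3(1) by (intro exI[of _ "B1 + B2 + B3"]) auto
qed

definition "bound = (SOME B. B > 0 \<and> (\<forall>s\<in>{0..1}. \<forall>x. \<bar>\<phi> s x\<bar> \<le> B \<and> \<bar>phi_t s x\<bar> \<le> B \<and> \<bar>phi_xx s x\<bar> \<le> B))"

lemma bound_pos: "bound > 0"
  and abs_phi_le_bound: "s \<in> {0..1} \<Longrightarrow> \<bar>\<phi> s x\<bar> \<le> bound"
  and abs_phi_t_le_bound: "s \<in> {0..1} \<Longrightarrow> \<bar>phi_t s x\<bar> \<le> bound"
  and abs_phi_xx_le_bound: "s \<in> {0..1} \<Longrightarrow> \<bar>phi_xx s x\<bar> \<le> bound"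
  using someI_ex[OF phi_bounded] unfolding bound_def by auto

lemma borel_measurable_phi [measurable]: "(\<lambda>p. \<phi> (fst p) (snd p)) \<in> borel_measurable (borel \<Otimes>\<^sub>M borel)"
  using borel_measurable_continuous_onI[OF continuous_on_phi] by (simp add: borel_prod case_prod_beta')

lemma borel_measurable_phi_t [measurable]: "(\<lambda>p. phi_t (fst p) (snd p)) \<in> borel_measurable (borel \<Otimes>\<^sub>M borel)"
  using borel_measurable_continuous_onI[OF continuous_on_phi_t] by (simp add: borel_prod case_prod_beta')

lemma borel_measurable_phi_slice [measurable]: "\<phi> s \<in> borel_measurable borel"
  by (rule borel_measurable_continuous_onI[OF continuous_on_slice_snd[OF continuous_on_phi]])

lemma borel_measurable_phi_t_slice [measurable]: "phi_t s \<in> borel_measurable borel"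
  by (rule borel_measurable_continuous_onI[OF continuous_on_slice_snd[OF continuous_on_phi_t]])

lemma borel_measurable_phi_xx_slice [measurable]: "phi_xx s \<in> borel_measurable borel"
  by (rule borel_measurable_continuous_onI[OF continuous_on_slice_snd[OF continuous_on_phi_xx]])

end

section \<open>Power-law tails\<close>

lemma one_plus_powr_has_integral_halfline:
  fixes e :: real assumes e: "e > 1"
  shows "((\<lambda>x. (1 + x) powr (-e)) has_integral (1 / (e - 1))) {0..}"
proof (rule has_integral_to_inf)
  show "(\<lambda>x. (1 + x) powr (-e)) integrable_on {0..y}" for y
    by (intro integrable_continuous_interval continuous_intros) auto
  define F where "F = (\<lambda>x::real. (1 + x) powr (1 - e) / (1 - e))"
  have F_deriv: "(F has_real_derivative (1 + x) powr (-e)) (at x)" if "x \<ge> 0" for x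
  proof -
    have "((\<lambda>x. (1 + x) powr (1 - e)) has_real_derivative (1 - e) * (1 + x) powr (1 - e - 1) * 1) (at x)"
      by (rule DERIV_chain2[OF has_real_derivative_powr]) (use that in \<open>auto intro!: derivative_eq_intros\<close>)
    then show ?thesis unfolding F_def using e by (auto dest: DERIV_cdivide[where c = "1 - e"])
  qed
  have "((\<lambda>x. (1 + x) powr (-e)) has_integral (F y - F 0)) {0..y}" if "y \<ge> 0" for y
    using that
    by (intro fundamental_theorem_of_calculus)
       (auto intro!: has_field_derivative_at_within F_deriv
             simp flip: has_real_derivative_iff_has_vector_derivative)
  then have "\<forall>\<^sub>F y in at_top. integral {0..y} (\<lambda>x. (1 + x) powr (-e)) = F y - F 0"
    by (meson eventually_at_top_linorderI integral_unique)
  moreover have "((\<lambda>y::real. (1 + y) powr (1 - e)) \<longlongrightarrow> 0) at_top"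
    using e by (intro tendsto_neg_powr filterlim_tendsto_add_at_top[OF tendsto_const filterlim_ident]) auto
  then have "((\<lambda>y::real. F y - F 0) \<longlongrightarrow> 0 / (1 - e) - F 0) at_top"
    unfolding F_def using e by (intro tendsto_diff tendsto_divide tendsto_const) auto
  moreover have "0 / (1 - e) - F 0 = 1 / (e - 1)" using e by (simp add: F_def field_simps)
  ultimately show "((\<lambda>y. integral {0..y} (\<lambda>x. (1 + x) powr (-e))) \<longlongrightarrow> 1 / (e - 1)) at_top"
    by (simp add: filterlim_cong)
qed simp

lemma nn_integral_reflect_lborel:
  fixes g :: "real \<Rightarrow> ennreal" assumes [measurable]: "g \<in> borel_measurable borel"
  shows "(\<integral>\<^sup>+x. g (- x) \<partial>lborel) = (\<integral>\<^sup>+x. g x \<partial>lborel)"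
  by (subst lborel_distr_uminus[symmetric]) (simp add: nn_integral_distr)

lemma integrable_one_plus_abs_powr:
  fixes e :: real assumes e: "e > 1"
  shows "integrable lborel (\<lambda>x. (1 + \<bar>x\<bar>) powr (-e))"
proof (rule integrableI_bounded)
  let ?f = "\<lambda>x::real. ennreal ((1 + \<bar>x\<bar>) powr (-e))"
  have half: "(\<integral>\<^sup>+x. ?f x * indicator {0..} x \<partial>lborel) = ennreal (1 / (e - 1))"
  proof -
    have "(\<integral>\<^sup>+x. ?f x * indicator {0..} x \<partial>lborel)
        = (\<integral>\<^sup>+x. ennreal ((1 + x) powr (-e)) * indicator {0..} x \<partial>lborel)"
      by (intro nn_integral_cong) (auto split: split_indicator)
    also have "\<dots> = ennreal (1 / (e - 1))"
      by (rule nn_integral_has_integral_lebesgue'[OF _ one_plus_powr_has_integral_halfline[OF e]]) simp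
    finally show ?thesis .
  qed
  have "(\<integral>\<^sup>+x. ?f x \<partial>lborel) \<le> (\<integral>\<^sup>+x. ?f x * indicator {0..} x + ?f (- x) * indicator {0..} (- x) \<partial>lborel)"
    by (intro nn_integral_mono) (auto split: split_indicator)
  also have "\<dots> = (\<integral>\<^sup>+x. ?f x * indicator {0..} x \<partial>lborel) + (\<integral>\<^sup>+x. ?f (- x) * indicator {0..} (- x) \<partial>lborel)"
    by (intro nn_integral_add) auto
  also have "(\<integral>\<^sup>+x. ?f (- x) * indicator {0..} (- x) \<partial>lborel) = (\<integral>\<^sup>+x. ?f x * indicator {0..} x \<partial>lborel)"
    by (rule nn_integral_reflect_lborel[where g = "\<lambda>x. ?f x * indicator {0..} x"]) auto
  finally have "(\<integral>\<^sup>+x. ?f x \<partial>lborel) \<le> ennreal (1 / (e - 1)) + ennreal (1 / (e - 1))"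
    using half by simp
  also have "\<dots> < \<infinity>" by simp
  finally show "(\<integral>\<^sup>+x. ennreal (norm ((1 + \<bar>x\<bar>) powr (-e))) \<partial>lborel) < \<infinity>" by simp
qed simp

lemma integrable_if_powr_decay:
  fixes f :: "real \<Rightarrow> real"
  assumes e: "e > 1" and [measurable]: "f \<in> borel_measurable borel"
    and decay: "\<And>x. \<bar>f x\<bar> \<le> K * (1 + \<bar>x\<bar>) powr (-e)"
  shows "integrable lborel f"
  by (rule integrable_dominated[OF _ _ decay]) (use integrable_one_plus_abs_powr[OF e] in simp_all)

definition powerlaw_norm :: "real \<Rightarrow> real" where
  "powerlaw_norm p = (\<integral>x. (1 + \<bar>x\<bar>) powr (-p) \<partial>lborel)"

definition powerlaw_density :: "real \<Rightarrow> real \<Rightarrow> real" where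
  "powerlaw_density p x = (1 + \<bar>x\<bar>) powr (-p) / powerlaw_norm p"

definition powerlaw :: "real \<Rightarrow> real measure" where
  "powerlaw p = density lborel (\<lambda>x. ennreal (powerlaw_density p x))"

lemma powerlaw_norm_pos: assumes "p > 1" shows "powerlaw_norm p > 0"
proof -
  have int: "integrable lborel (\<lambda>x. (1 + \<bar>x\<bar>) powr (-p))"
    using integrable_one_plus_abs_powr[OF assms] .
  have "powerlaw_norm p \<noteq> 0"
  proof
    assume "powerlaw_norm p = 0"
    then have "AE x in lborel. (1 + \<bar>x\<bar>) powr (-p) = (0::real)"
      using integral_nonneg_eq_0_iff_AE[OF int] unfolding powerlaw_norm_def by simp
    then have "AE x in (lborel::real measure). False" by (rule eventually_mono) (smt (verit) powr_gt_zero)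
    then have "ae_filter (lborel::real measure) = bot" by (simp add: trivial_limit_def)
    then show False by (simp add: ae_filter_eq_bot_iff)
  qed
  moreover have "powerlaw_norm p \<ge> 0"
    unfolding powerlaw_norm_def by (intro integral_nonneg_AE) simp
  ultimately show ?thesis by simp
qed

lemma powerlaw_density_pos: "p > 1 \<Longrightarrow> powerlaw_density p x > 0"
  using powerlaw_norm_pos by (simp add: powerlaw_density_def)

lemma borel_measurable_powerlaw_density [measurable]: "powerlaw_density p \<in> borel_measurable borel"
  unfolding powerlaw_density_def by measurable

lemma sets_powerlaw [simp]: "sets (powerlaw p) = sets borel"
  and space_powerlaw [simp]: "space (powerlaw p) = UNIV"
  by (simp_all add: powerlaw_def)

lemma prob_space_powerlaw: assumes "p > 1" shows "prob_space (powerlaw p)"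
proof
  have "emeasure (powerlaw p) (space (powerlaw p)) = (\<integral>\<^sup>+x. ennreal (powerlaw_density p x) \<partial>lborel)"
    by (simp add: powerlaw_def emeasure_density)
  also have "\<dots> = ennreal (\<integral>x. powerlaw_density p x \<partial>lborel)"
    using integrable_one_plus_abs_powr[OF assms] powerlaw_density_pos[OF assms]
    by (intro nn_integral_eq_integral) (auto simp: powerlaw_density_def intro: less_imp_le)
  also have "(\<integral>x. powerlaw_density p x \<partial>lborel) = 1"
    using powerlaw_norm_pos[OF assms] by (simp add: powerlaw_density_def powerlaw_norm_def)
  finally show "emeasure (powerlaw p) (space (powerlaw p)) = 1" by simp
qed

lemma powerlaw_integrable_moment:
  assumes p: "p > 1" and r: "r < p - 1"
  shows "integrable (powerlaw p) (\<lambda>x. (1 + \<bar>x\<bar>) powr r)"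
proof -
  have "integrable lborel (\<lambda>x. powerlaw_density p x * (1 + \<bar>x\<bar>) powr r)"
  proof (rule integrable_if_powr_decay[of "p - r"])
    fix x
    have "\<bar>powerlaw_density p x * (1 + \<bar>x\<bar>) powr r\<bar> = (1 / powerlaw_norm p) * (1 + \<bar>x\<bar>) powr (- (p - r))"
      using powerlaw_norm_pos[OF p] by (simp add: powerlaw_density_def powr_add[symmetric])
    then show "\<bar>powerlaw_density p x * (1 + \<bar>x\<bar>) powr r\<bar> \<le> (1 / powerlaw_norm p) * (1 + \<bar>x\<bar>) powr (- (p - r))"
      by simp
  qed (use r in auto)
  then show ?thesis unfolding powerlaw_def
    by (subst integrable_density) (use powerlaw_density_pos[OF p] in \<open>auto intro: less_imp_le\<close>)
qed

lemma powerlaw_mean: assumes "p > 1" shows "(\<integral>x. x \<partial>powerlaw p) = 0"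
proof -
  have "(\<integral>x. x \<partial>powerlaw p) = (\<integral>x. powerlaw_density p x * x \<partial>lborel)"
    unfolding powerlaw_def
    by (subst integral_density) (use powerlaw_density_pos[OF assms] in \<open>auto intro: less_imp_le\<close>)
  moreover have "(\<integral>x. powerlaw_density p x * x \<partial>lborel) = - (\<integral>x. powerlaw_density p x * x \<partial>lborel)"
  proof -
    have "(\<integral>x. powerlaw_density p x * x \<partial>lborel)
        = \<bar>-1\<bar> *\<^sub>R (\<integral>x. powerlaw_density p (0 + -1 * x) * (0 + -1 * x) \<partial>lborel)"
      by (rule lborel_integral_real_affine) simp
    also have "\<dots> = (\<integral>x. - (powerlaw_density p x * x) \<partial>lborel)"
      by (simp add: powerlaw_density_def)
    finally show ?thesis by simp
  qed
  ultimately show ?thesis by simp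
qed

lemma P2c_prob: "P2c \<nu> \<Longrightarrow> prob_space \<nu>"
  and P2c_sets: "P2c \<nu> \<Longrightarrow> sets \<nu> = sets borel"
  and P2c_mean: "P2c \<nu> \<Longrightarrow> (\<integral>x. x \<partial>\<nu>) = 0"
  by (simp_all add: P2c_def)

lemma P2c_space: "P2c \<nu> \<Longrightarrow> space \<nu> = UNIV"
  using sets_eq_imp_space_eq[OF P2c_sets] by simp

lemma measurable_P2c_eq: "P2c \<nu> \<Longrightarrow> measurable \<nu> N = measurable borel N"
  using measurable_cong_sets[OF P2c_sets refl] by blast

lemma finite_measure_P2c: "P2c \<nu> \<Longrightarrow> finite_measure \<nu>"
  using P2c_prob prob_space.axioms(1) by blast

lemma sigma_finite_measure_P2c: "P2c \<nu> \<Longrightarrow> sigma_finite_measure \<nu>"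
  using P2c_prob prob_space_imp_sigma_finite by blast

lemma P2c_integrable_sq: assumes "P2c \<nu>" shows "integrable \<nu> (\<lambda>x. x\<^sup>2)"
proof (rule integrableI_bounded)
  show "(\<lambda>x. x\<^sup>2) \<in> borel_measurable \<nu>" unfolding measurable_P2c_eq[OF assms] by measurable
  have "(\<integral>\<^sup>+x. ennreal (x\<^sup>2) \<partial>\<nu>) < \<infinity>" using assms by (simp add: P2c_def)
  then show "(\<integral>\<^sup>+x. ennreal (norm (x\<^sup>2)) \<partial>\<nu>) < \<infinity>" by simp
qed

lemma P2c_integrable_abs: assumes "P2c \<nu>" shows "integrable \<nu> (\<lambda>x. \<bar>x\<bar>)"
proof (rule integrable_dominated)
  interpret prob_space \<nu> using P2c_prob[OF assms] .
  show "integrable \<nu> (\<lambda>x. 1 + x\<^sup>2)" using P2c_integrable_sq[OF assms] by simp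
  show "(\<lambda>x. \<bar>x\<bar>) \<in> borel_measurable \<nu>" unfolding measurable_P2c_eq[OF assms] by measurable
  show "\<bar>\<bar>x\<bar>\<bar> \<le> 1 + x\<^sup>2" for x :: real
    using sum_power2_ge_zero[of "\<bar>x\<bar> - 1" 0] by (simp add: power2_eq_square algebra_simps)
qed

lemma P2c_integrable_id: assumes "P2c \<nu>" shows "integrable \<nu> (\<lambda>x. x)"
proof -
  have "(\<lambda>x. x) \<in> borel_measurable \<nu>" unfolding measurable_P2c_eq[OF assms] by measurable
  then show ?thesis using P2c_integrable_abs[OF assms] integrable_abs_iff by blast
qed

lemma P2c_integrable_abs_plus: assumes "P2c \<nu>" shows "integrable \<nu> (\<lambda>x. \<bar>x\<bar> + c)"
proof -
  interpret prob_space \<nu> using P2c_prob[OF assms] .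
  show ?thesis using P2c_integrable_abs[OF assms] by simp
qed

lemma P2c_powerlaw: assumes "p > 3" shows "P2c (powerlaw p)"
proof -
  have bound: "\<bar>x\<^sup>2\<bar> \<le> (1 + \<bar>x\<bar>) powr 2" for x :: real
  proof -
    have "\<bar>x\<bar>\<^sup>2 \<le> (1 + \<bar>x\<bar>)\<^sup>2" by (rule power_mono) auto
    then show ?thesis by (simp add: powr_numeral)
  qed
  have "integrable (powerlaw p) (\<lambda>x. (1 + \<bar>x\<bar>) powr 2)"
    using assms by (intro powerlaw_integrable_moment) auto
  then have "integrable (powerlaw p) (\<lambda>x. x\<^sup>2)"
    by (rule integrable_dominated[OF _ _ bound]) (simp add: powerlaw_def)
  then have "(\<integral>\<^sup>+x. ennreal (x\<^sup>2) \<partial>powerlaw p) < \<infinity>"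
    by (simp add: integrable_iff_bounded)
  moreover have "prob_space (powerlaw p)" "(\<integral>x. x \<partial>powerlaw p) = 0"
    using assms by (simp_all add: prob_space_powerlaw powerlaw_mean)
  ultimately show ?thesis unfolding P2c_def by simp
qed

section \<open>Call functions and the convex order\<close>

definition call_fun :: "real measure \<Rightarrow> real \<Rightarrow> real" where
  "call_fun \<nu> x = (\<integral>y. max 0 (y - x) \<partial>\<nu>)"

definition put_fun :: "real measure \<Rightarrow> real \<Rightarrow> real" where
  "put_fun \<nu> x = (\<integral>y. max 0 (x - y) \<partial>\<nu>)"

lemma integrable_call_payoff: assumes "P2c \<nu>" shows "integrable \<nu> (\<lambda>y. max 0 (y - x))"
proof (rule integrable_dominated[OF P2c_integrable_abs_plus[OF assms, of "\<bar>x\<bar>"]])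
  show "(\<lambda>y. max 0 (y - x)) \<in> borel_measurable \<nu>" unfolding measurable_P2c_eq[OF assms] by measurable
qed auto

lemma integrable_put_payoff: assumes "P2c \<nu>" shows "integrable \<nu> (\<lambda>y. max 0 (x - y))"
proof (rule integrable_dominated[OF P2c_integrable_abs_plus[OF assms, of "\<bar>x\<bar>"]])
  show "(\<lambda>y. max 0 (x - y)) \<in> borel_measurable \<nu>" unfolding measurable_P2c_eq[OF assms] by measurable
qed auto

lemma call_fun_nonneg: "call_fun \<nu> x \<ge> 0"
  and put_fun_nonneg: "put_fun \<nu> x \<ge> 0"
  unfolding call_fun_def put_fun_def by (auto intro: integral_nonneg_AE)

lemma call_put_parity: assumes "P2c \<nu>" shows "call_fun \<nu> x = put_fun \<nu> x - x"
proof -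
  interpret prob_space \<nu> using P2c_prob[OF assms] .
  have "call_fun \<nu> x = (\<integral>y. (y - x) + max 0 (x - y) \<partial>\<nu>)"
    unfolding call_fun_def by (rule Bochner_Integration.integral_cong) auto
  also have "\<dots> = (\<integral>y. y \<partial>\<nu>) - x + put_fun \<nu> x"
    unfolding put_fun_def using P2c_integrable_id[OF assms] integrable_put_payoff[OF assms]
    by (simp add: prob_space)
  finally show ?thesis using P2c_mean[OF assms] by simp
qed

lemma call_fun_le: assumes "P2c \<nu>" shows "call_fun \<nu> x \<le> (\<integral>y. \<bar>y\<bar> \<partial>\<nu>) + \<bar>x\<bar>"
proof -
  interpret prob_space \<nu> using P2c_prob[OF assms] .
  have "call_fun \<nu> x \<le> (\<integral>y. \<bar>y\<bar> + \<bar>x\<bar> \<partial>\<nu>)"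
    unfolding call_fun_def
    by (intro integral_mono integrable_call_payoff assms P2c_integrable_abs_plus) auto
  also have "\<dots> = (\<integral>y. \<bar>y\<bar> \<partial>\<nu>) + \<bar>x\<bar>"
    using P2c_integrable_id[OF assms] by (simp add: prob_space)
  finally show ?thesis .
qed

lemma borel_measurable_call_fun [measurable]:
  assumes "P2c \<nu>" shows "call_fun \<nu> \<in> borel_measurable borel"
proof -
  have "(\<lambda>(x, y). max 0 (y - x)) \<in> borel_measurable (borel \<Otimes>\<^sub>M \<nu>)"
    by (rule measurable_pair_measure_cong_sets) (simp_all add: P2c_sets[OF assms])
  then show ?thesis unfolding call_fun_def
    using sigma_finite_measure.borel_measurable_lebesgue_integral[OF sigma_finite_measure_P2c[OF assms],
        of "\<lambda>x y. max 0 (y - x)" borel]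
    by simp
qed

lemma convex_on_max_0_affine: "convex_on UNIV (\<lambda>y::real. max 0 (a * y + b))"
proof (rule convex_onI)
  fix t u v :: real assume t: "t > 0" "t < 1"
  have "a * ((1 - t) *\<^sub>R u + t *\<^sub>R v) + b = (1 - t) * (a * u + b) + t * (a * v + b)"
    by (simp add: algebra_simps)
  moreover have "(1 - t) * (a * u + b) \<le> (1 - t) * max 0 (a * u + b)" "t * (a * v + b) \<le> t * max 0 (a * v + b)"
    using t by (intro mult_left_mono; simp)+
  moreover have "0 \<le> (1 - t) * max 0 (a * u + b) + t * max 0 (a * v + b)" using t by simp
  ultimately show "max 0 (a * ((1 - t) *\<^sub>R u + t *\<^sub>R v) + b) \<le> (1 - t) * max 0 (a * u + b) + t * max 0 (a * v + b)"
    by linarith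
qed simp

lemma convex_call_payoff: "convex_on UNIV (\<lambda>y::real. max 0 (y - x))"
  using convex_on_max_0_affine[of 1 "-x"] by simp

lemma convex_put_payoff: "convex_on UNIV (\<lambda>y::real. max 0 (x - y))"
  using convex_on_max_0_affine[of "-1" x] by simp

lemma cx_le_call_fun: assumes "cx_le \<mu>0 \<mu>1" "P2c \<mu>1" shows "call_fun \<mu>0 x \<le> call_fun \<mu>1 x"
  using assms(1) convex_call_payoff integrable_call_payoff[OF assms(2)] unfolding cx_le_def call_fun_def by blast

lemma cx_le_put_fun: assumes "cx_le \<mu>0 \<mu>1" "P2c \<mu>1" shows "put_fun \<mu>0 x \<le> put_fun \<mu>1 x"
  using assms(1) convex_put_payoff integrable_put_payoff[OF assms(2)] unfolding cx_le_def put_fun_def by blast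

lemma cx_le_refl: "cx_le \<mu> \<mu>"
  by (simp add: cx_le_def)

lemma one_plus_abs_powr_le:
  fixes y q :: real assumes "q \<ge> 0"
  shows "(1 + \<bar>y\<bar>) powr q \<le> 2 powr q * (1 + \<bar>y\<bar> powr q)"
proof -
  have "(1 + \<bar>y\<bar>) powr q \<le> (2 * max 1 \<bar>y\<bar>) powr q"
    using assms by (intro powr_mono2) auto
  also have "\<dots> = 2 powr q * max 1 \<bar>y\<bar> powr q" by (simp add: powr_mult)
  also have "max 1 \<bar>y\<bar> powr q \<le> 1 + \<bar>y\<bar> powr q"
    by (cases "\<bar>y\<bar> \<le> 1") (auto simp: max_def)
  finally show ?thesis by simp
qed

lemma P2c_integrable_moment:
  assumes \<nu>: "P2c \<nu>" and q: "q \<ge> 0" and mom: "(\<integral>\<^sup>+ x. ennreal (\<bar>x\<bar> powr q) \<partial>\<nu>) < \<infinity>"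
  shows "integrable \<nu> (\<lambda>y. (1 + \<bar>y\<bar>) powr q)"
proof (rule integrable_dominated)
  interpret prob_space \<nu> using P2c_prob[OF \<nu>] .
  have "integrable \<nu> (\<lambda>y. \<bar>y\<bar> powr q)"
    by (rule integrableI_bounded) (use mom in \<open>simp_all add: measurable_P2c_eq[OF \<nu>]\<close>)
  then show "integrable \<nu> (\<lambda>y. 2 powr q * (1 + \<bar>y\<bar> powr q))" by simp
  show "(\<lambda>y. (1 + \<bar>y\<bar>) powr q) \<in> borel_measurable \<nu>" unfolding measurable_P2c_eq[OF \<nu>] by measurable
  show "\<bar>(1 + \<bar>y\<bar>) powr q\<bar> \<le> 2 powr q * (1 + \<bar>y\<bar> powr q)" for y
    using one_plus_abs_powr_le[OF q] by simp
qed

lemma call_payoff_le_powr: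
  fixes x y q :: real assumes q: "q \<ge> 1" and x: "x \<ge> 0"
  shows "max 0 (y - x) \<le> (1 + \<bar>x\<bar>) powr (1 - q) * (1 + \<bar>y\<bar>) powr q"
proof (cases "y \<le> x")
  case False
  have "(1 + \<bar>y\<bar>) powr (1 - q) \<le> (1 + \<bar>x\<bar>) powr (1 - q)"
    using q x False by (intro powr_mono2') auto
  then have "(1 + \<bar>y\<bar>) powr (1 - q) * (1 + \<bar>y\<bar>) powr q \<le> (1 + \<bar>x\<bar>) powr (1 - q) * (1 + \<bar>y\<bar>) powr q"
    by (intro mult_right_mono) auto
  moreover have "(1 + \<bar>y\<bar>) powr (1 - q) * (1 + \<bar>y\<bar>) powr q = 1 + \<bar>y\<bar>"
    by (simp add: powr_add[symmetric])
  ultimately show ?thesis using x by simp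
qed simp

lemma call_fun_decay:
  assumes "P2c \<nu>" "integrable \<nu> (\<lambda>y. (1 + \<bar>y\<bar>) powr q)" "q \<ge> 1" "x \<ge> 0"
  shows "call_fun \<nu> x \<le> (1 + \<bar>x\<bar>) powr (1 - q) * (\<integral>y. (1 + \<bar>y\<bar>) powr q \<partial>\<nu>)"
proof -
  have "call_fun \<nu> x \<le> (\<integral>y. (1 + \<bar>x\<bar>) powr (1 - q) * (1 + \<bar>y\<bar>) powr q \<partial>\<nu>)"
    unfolding call_fun_def
    by (intro integral_mono integrable_call_payoff assms(1) call_payoff_le_powr assms(3,4)) (use assms(2) in auto)
  then show ?thesis by simp
qed

lemma put_fun_decay:
  assumes "P2c \<nu>" "integrable \<nu> (\<lambda>y. (1 + \<bar>y\<bar>) powr q)" "q \<ge> 1" "x \<le> 0"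
  shows "put_fun \<nu> x \<le> (1 + \<bar>x\<bar>) powr (1 - q) * (\<integral>y. (1 + \<bar>y\<bar>) powr q \<partial>\<nu>)"
proof -
  have "max 0 (x - y) \<le> (1 + \<bar>x\<bar>) powr (1 - q) * (1 + \<bar>y\<bar>) powr q" for y
    using call_payoff_le_powr[OF assms(3), of "- x" "- y"] assms(4) by simp
  then have "put_fun \<nu> x \<le> (\<integral>y. (1 + \<bar>x\<bar>) powr (1 - q) * (1 + \<bar>y\<bar>) powr q \<partial>\<nu>)"
    unfolding put_fun_def by (intro integral_mono integrable_put_payoff assms(1)) (use assms(2) in auto)
  then show ?thesis by simp
qed

text \<open>Convex order bounds the calls and puts of \<open>\<nu>\<close> by those of \<open>\<mu>1\<close>;
  put-call parity turns the difference of calls into a difference of puts for x \<le> 0.\<close>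

lemma call_fun_diff_decay:
  assumes \<nu>: "P2c \<nu>" "cx_le \<nu> \<mu>1" and \<mu>1: "P2c \<mu>1" "integrable \<mu>1 (\<lambda>y. (1 + \<bar>y\<bar>) powr q)"
    and \<eta>: "P2c \<eta>" "integrable \<eta> (\<lambda>y. (1 + \<bar>y\<bar>) powr q)" and q: "q \<ge> 1"
  shows "\<bar>call_fun \<nu> x - call_fun \<eta> x\<bar> \<le>
    ((\<integral>y. (1 + \<bar>y\<bar>) powr q \<partial>\<mu>1) + (\<integral>y. (1 + \<bar>y\<bar>) powr q \<partial>\<eta>)) * (1 + \<bar>x\<bar>) powr (1 - q)"
proof (cases "x \<ge> 0")
  case True
  have "call_fun \<nu> x \<le> (1 + \<bar>x\<bar>) powr (1 - q) * (\<integral>y. (1 + \<bar>y\<bar>) powr q \<partial>\<mu>1)"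
    using cx_le_call_fun[OF \<nu>(2) \<mu>1(1), of x] call_fun_decay[OF \<mu>1 q True] by linarith
  moreover have "call_fun \<eta> x \<le> (1 + \<bar>x\<bar>) powr (1 - q) * (\<integral>y. (1 + \<bar>y\<bar>) powr q \<partial>\<eta>)"
    using call_fun_decay[OF \<eta> q True] .
  ultimately show ?thesis
    using call_fun_nonneg[of \<nu> x] call_fun_nonneg[of \<eta> x] by (simp add: algebra_simps abs_le_iff)
next
  case False
  then have x: "x \<le> 0" by simp
  have "put_fun \<nu> x \<le> (1 + \<bar>x\<bar>) powr (1 - q) * (\<integral>y. (1 + \<bar>y\<bar>) powr q \<partial>\<mu>1)"
    using cx_le_put_fun[OF \<nu>(2) \<mu>1(1), of x] put_fun_decay[OF \<mu>1 q x] by linarith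
  moreover have "put_fun \<eta> x \<le> (1 + \<bar>x\<bar>) powr (1 - q) * (\<integral>y. (1 + \<bar>y\<bar>) powr q \<partial>\<eta>)"
    using put_fun_decay[OF \<eta> q x] .
  moreover have "call_fun \<nu> x - call_fun \<eta> x = put_fun \<nu> x - put_fun \<eta> x"
    using call_put_parity[OF \<nu>(1)] call_put_parity[OF \<eta>(1)] by simp
  ultimately show ?thesis
    using put_fun_nonneg[of \<nu> x] put_fun_nonneg[of \<eta> x] by (simp add: algebra_simps abs_le_iff)
qed

context test_function
begin

lemma integral_phi_xx_call_payoff: "(\<integral>x. phi_xx s x * max 0 (y - x) \<partial>lborel) = \<phi> s y"
proof -
  define L where "L = - radius - \<bar>y\<bar> - 1"
  have L: "L \<le> y" "radius < \<bar>L\<bar>" using radius_pos by (auto simp: L_def)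
  define F where "F = (\<lambda>x. phi_x s x * (y - x) + \<phi> s x)"
  have F_deriv: "(F has_real_derivative phi_xx s x * (y - x)) (at x)" for x
  proof -
    have "(F has_real_derivative (phi_xx s x * (y - x) + (0 - 1) * phi_x s x) + phi_x s x) (at x)"
      unfolding F_def
      by (intro DERIV_add DERIV_mult phi_x_has_space_derivative phi_has_space_derivative DERIV_diff
          DERIV_const DERIV_ident)
    then show ?thesis by simp
  qed
  have "(LBINT x. indicat_real {L..y} x *\<^sub>R (phi_xx s x * (y - x))) = F y - F L"
    by (rule integral_FTC_atLeastAtMost[OF L(1)])
       (auto intro!: has_field_derivative_at_within F_deriv continuous_intros
          continuous_on_subset[OF continuous_on_slice_snd[OF continuous_on_phi_xx]]
          simp flip: has_real_derivative_iff_has_vector_derivative)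
  also have "F y - F L = \<phi> s y" using L phi_x_eq_0_far phi_eq_0_far by (simp add: F_def)
  also have "(LBINT x. indicat_real {L..y} x *\<^sub>R (phi_xx s x * (y - x))) = (\<integral>x. phi_xx s x * max 0 (y - x) \<partial>lborel)"
  proof (rule Bochner_Integration.integral_cong[OF refl])
    fix x
    show "indicat_real {L..y} x *\<^sub>R (phi_xx s x * (y - x)) = phi_xx s x * max 0 (y - x)"
    proof (cases "x < L")
      case True
      then have "radius < \<bar>x\<bar>" using L radius_pos by (auto simp: L_def)
      then show ?thesis using phi_xx_eq_0_far True by simp
    qed (auto simp: indicator_def)
  qed
  finally show ?thesis by simp
qed

lemma integrable_phi_xx_call_fun:
  assumes \<nu>: "P2c \<nu>" and s: "s \<in> {0..1}"
  shows "integrable lborel (\<lambda>x. phi_xx s x * call_fun \<nu> x)"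
proof (rule integrable_dominated)
  let ?C = "bound * ((\<integral>y. \<bar>y\<bar> \<partial>\<nu>) + radius)"
  show "integrable lborel (\<lambda>x. ?C * indicat_real {- radius..radius} x)"
    using radius_pos by (intro integrable_mult_right integrable_real_indicator) auto
  show "(\<lambda>x. phi_xx s x * call_fun \<nu> x) \<in> borel_measurable lborel"
    using borel_measurable_call_fun[OF \<nu>] by measurable
  show "\<bar>phi_xx s x * call_fun \<nu> x\<bar> \<le> ?C * indicator {-radius..radius} x" for x
  proof (cases "\<bar>x\<bar> \<le> radius")
    case True
    then have "\<bar>phi_xx s x\<bar> * call_fun \<nu> x \<le> ?C"
      using abs_phi_xx_le_bound[OF s] call_fun_le[OF \<nu>, of x] call_fun_nonneg[of \<nu> x] bound_pos
      by (intro mult_mono) auto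
    moreover have "x \<in> {-radius..radius}" using True by auto
    ultimately show ?thesis using call_fun_nonneg[of \<nu> x] by (simp add: abs_mult)
  next
    case False
    then have "x \<notin> {-radius..radius}" by auto
    then show ?thesis using False phi_xx_eq_0_far by simp
  qed
qed

lemma integral_phi_xx_call_fun:
  assumes \<nu>: "P2c \<nu>" and s: "s \<in> {0..1}"
  shows "(\<integral>x. phi_xx s x * call_fun \<nu> x \<partial>lborel) = (\<integral>y. \<phi> s y \<partial>\<nu>)"
proof -
  interpret pair_sigma_finite lborel \<nu>
    using sigma_finite_measure_P2c[OF \<nu>] by (simp add: pair_sigma_finite_def lborel.sigma_finite_measure_axioms)
  define f where "f = (\<lambda>x y. phi_xx s x * max 0 (y - x))"
  have "integrable (lborel \<Otimes>\<^sub>M \<nu>) (case_prod f)"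
  proof (rule Fubini_integrable)
    show "case_prod f \<in> borel_measurable (lborel \<Otimes>\<^sub>M \<nu>)"
      unfolding f_def by (rule measurable_pair_measure_cong_sets) (simp_all add: P2c_sets[OF \<nu>])
    have "(\<lambda>x. \<integral>y. norm (f x y) \<partial>\<nu>) = (\<lambda>x. \<bar>phi_xx s x * call_fun \<nu> x\<bar>)"
      unfolding f_def call_fun_def by (auto simp: abs_mult call_fun_nonneg call_fun_def[symmetric])
    then show "integrable lborel (\<lambda>x. \<integral>y. norm (case_prod f (x, y)) \<partial>\<nu>)"
      using integrable_phi_xx_call_fun[OF \<nu> s] by simp
    show "AE x in lborel. integrable \<nu> (\<lambda>y. case_prod f (x, y))"
      unfolding f_def using integrable_call_payoff[OF \<nu>] by simp
  qed
  then have "(\<integral>x. (\<integral>y. f x y \<partial>\<nu>) \<partial>lborel) = (\<integral>y. (\<integral>x. f x y \<partial>lborel) \<partial>\<nu>)"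
    using Fubini_integral by metis
  then show ?thesis unfolding f_def call_fun_def integral_phi_xx_call_payoff by simp
qed

lemma integrable_phi_slice:
  assumes \<nu>: "P2c \<nu>" and s: "s \<in> {0..1}"
  shows "integrable \<nu> (\<phi> s)" "integrable \<nu> (phi_t s)"
    and "\<bar>\<integral>x. \<phi> s x \<partial>\<nu>\<bar> \<le> bound" "\<bar>\<integral>x. phi_t s x \<partial>\<nu>\<bar> \<le> bound"
proof -
  interpret prob_space \<nu> using P2c_prob[OF \<nu>] .
  have *: "integrable \<nu> f \<and> \<bar>\<integral>x. f x \<partial>\<nu>\<bar> \<le> bound"
    if [measurable]: "f \<in> borel_measurable borel" and f: "\<And>x. \<bar>f x\<bar> \<le> bound" for f
  proof
    show i: "integrable \<nu> f"
      by (rule integrable_const_bound[where B = bound]) (simp_all add: f measurable_P2c_eq[OF \<nu>])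
    have "\<bar>\<integral>x. f x \<partial>\<nu>\<bar> \<le> (\<integral>x. \<bar>f x\<bar> \<partial>\<nu>)" by (rule integral_abs_bound)
    also have "\<dots> \<le> (\<integral>x. bound \<partial>\<nu>)" by (rule integral_mono) (simp_all add: i f)
    finally show "\<bar>\<integral>x. f x \<partial>\<nu>\<bar> \<le> bound" by (simp add: prob_space)
  qed
  show "integrable \<nu> (\<phi> s)" "\<bar>\<integral>x. \<phi> s x \<partial>\<nu>\<bar> \<le> bound"
    using *[of "\<phi> s"] abs_phi_le_bound[OF s] by simp_all
  show "integrable \<nu> (phi_t s)" "\<bar>\<integral>x. phi_t s x \<partial>\<nu>\<bar> \<le> bound"
    using *[of "phi_t s"] abs_phi_t_le_bound[OF s] by simp_all
qed

lemma borel_measurable_integral_phi [measurable]: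
  assumes \<nu>: "P2c \<nu>"
  shows "(\<lambda>s. \<integral>x. \<phi> s x \<partial>\<nu>) \<in> borel_measurable borel"
    and "(\<lambda>s. \<integral>x. phi_t s x \<partial>\<nu>) \<in> borel_measurable borel"
proof -
  have "(\<lambda>(s, x). \<phi> s x) \<in> borel_measurable (borel \<Otimes>\<^sub>M \<nu>)"
    using borel_measurable_phi unfolding case_prod_beta'
    by (rule measurable_pair_measure_cong_sets[rotated 2]) (simp_all add: P2c_sets[OF \<nu>])
  then show "(\<lambda>s. \<integral>x. \<phi> s x \<partial>\<nu>) \<in> borel_measurable borel"
    using sigma_finite_measure.borel_measurable_lebesgue_integral[OF sigma_finite_measure_P2c[OF \<nu>],
        of "\<lambda>s x. \<phi> s x" borel] by simp
  have "(\<lambda>(s, x). phi_t s x) \<in> borel_measurable (borel \<Otimes>\<^sub>M \<nu>)"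
    using borel_measurable_phi_t unfolding case_prod_beta'
    by (rule measurable_pair_measure_cong_sets[rotated 2]) (simp_all add: P2c_sets[OF \<nu>])
  then show "(\<lambda>s. \<integral>x. phi_t s x \<partial>\<nu>) \<in> borel_measurable borel"
    using sigma_finite_measure.borel_measurable_lebesgue_integral[OF sigma_finite_measure_P2c[OF \<nu>],
        of "\<lambda>s x. phi_t s x" borel] by simp
qed

lemma integral_01_time_derivative:
  assumes c: "\<And>s. (c has_real_derivative c' s) (at s)" and c': "continuous_on UNIV c'"
  shows "(LBINT s. indicat_real {0..1} s * (c s * phi_t s x + c' s * \<phi> s x)) = 0"
proof -
  have "(LBINT s. indicat_real {0..1} s *\<^sub>R (c s * phi_t s x + c' s * \<phi> s x)) = c 1 * \<phi> 1 x - c 0 * \<phi> 0 x"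
  proof (rule integral_FTC_atLeastAtMost)
    fix s :: real
    have "((\<lambda>s. c s * \<phi> s x) has_real_derivative c' s * \<phi> s x + phi_t s x * c s) (at s)"
      by (rule DERIV_mult[OF c phi_has_time_derivative])
    then show "((\<lambda>s. c s * \<phi> s x) has_vector_derivative c s * phi_t s x + c' s * \<phi> s x) (at s within {0..1})"
      by (auto intro!: has_field_derivative_at_within simp: algebra_simps
          simp flip: has_real_derivative_iff_has_vector_derivative)
  next
    have "continuous_on UNIV c" using c by (meson DERIV_isCont continuous_at_imp_continuous_on)
    moreover note c' continuous_on_slice_fst[OF continuous_on_phi_t] continuous_on_slice_fst[OF continuous_on_phi]
    ultimately have "continuous_on UNIV (\<lambda>s. c s * phi_t s x + c' s * \<phi> s x)"
      by (intro continuous_intros)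
    then show "continuous_on {0..1} (\<lambda>s. c s * phi_t s x + c' s * \<phi> s x)"
      by (rule continuous_on_subset) simp
  qed simp
  also have "\<dots> = 0" by (simp add: phi_eq_0_outside_01)
  finally show ?thesis by simp
qed

text \<open>In the weak sense, d/ds (c s \<cdot> \<nu>) = c' s \<cdot> \<nu>.\<close>

lemma time_identity:
  assumes \<nu>: "P2c \<nu>"
    and c: "\<And>s. (c has_real_derivative c' s) (at s)" and c': "continuous_on UNIV c'"
  shows "set_integrable lborel {0..1} (\<lambda>s. c s * (\<integral>x. phi_t s x \<partial>\<nu>))"
    and "set_integrable lborel {0..1} (\<lambda>s. c' s * (\<integral>x. \<phi> s x \<partial>\<nu>))"
    and "(\<integral>s\<in>{0..1}. c s * (\<integral>x. phi_t s x \<partial>\<nu>) \<partial>lborel) + (\<integral>s\<in>{0..1}. c' s * (\<integral>x. \<phi> s x \<partial>\<nu>) \<partial>lborel) = 0"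
proof -
  interpret pair_sigma_finite lborel \<nu>
    using sigma_finite_measure_P2c[OF \<nu>] by (simp add: pair_sigma_finite_def lborel.sigma_finite_measure_axioms)
  have cc: "continuous_on UNIV c" using c by (meson DERIV_isCont continuous_at_imp_continuous_on)
  have [measurable]: "c \<in> borel_measurable borel" "c' \<in> borel_measurable borel"
    using cc c' by (simp_all add: borel_measurable_continuous_onI)
  obtain K1 where K1: "K1 \<ge> 0" "\<And>s. s \<in> {0..1} \<Longrightarrow> \<bar>c s\<bar> \<le> K1"
    using bounded_on_01[OF continuous_on_subset[OF cc]] by auto
  obtain K2 where K2: "K2 \<ge> 0" "\<And>s. s \<in> {0..1} \<Longrightarrow> \<bar>c' s\<bar> \<le> K2"
    using bounded_on_01[OF continuous_on_subset[OF c']] by auto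
  note slice = integrable_phi_slice[OF \<nu>]
  have "\<bar>c s * (\<integral>x. phi_t s x \<partial>\<nu>)\<bar> \<le> K1 * bound" if "s \<in> {0..1}" for s
    unfolding abs_mult using K1 slice(4)[OF that] that by (auto intro!: mult_mono)
  then show si1: "set_integrable lborel {0..1} (\<lambda>s. c s * (\<integral>x. phi_t s x \<partial>\<nu>))"
    by (intro set_integrable_01_if_bounded) (simp_all add: \<nu>)
  have "\<bar>c' s * (\<integral>x. \<phi> s x \<partial>\<nu>)\<bar> \<le> K2 * bound" if "s \<in> {0..1}" for s
    unfolding abs_mult using K2 slice(3)[OF that] that by (auto intro!: mult_mono)
  then show si2: "set_integrable lborel {0..1} (\<lambda>s. c' s * (\<integral>x. \<phi> s x \<partial>\<nu>))"
    by (intro set_integrable_01_if_bounded) (simp_all add: \<nu>)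
  define g where "g = (\<lambda>(s, x). indicat_real {0..1} s * (c s * phi_t s x + c' s * \<phi> s x))"
  have g_int: "integrable (lborel \<Otimes>\<^sub>M \<nu>) g"
  proof (rule integrable_pair_if_bounded_on_strip[OF finite_measure_P2c[OF \<nu>] P2c_sets[OF \<nu>]])
    show "g \<in> borel_measurable (lborel \<Otimes>\<^sub>M \<nu>)"
      unfolding g_def by (rule measurable_pair_measure_cong_sets)
        (simp_all add: P2c_sets[OF \<nu>] case_prod_beta')
    have "\<bar>c s * phi_t s x + c' s * \<phi> s x\<bar> \<le> K1 * bound + K2 * bound" if "s \<in> {0..1}" for s x
      using K1 K2 abs_phi_le_bound[OF that] abs_phi_t_le_bound[OF that] that bound_pos
      by (intro order_trans[OF abs_triangle_ineq] add_mono) (auto simp: abs_mult intro!: mult_mono)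
    then show "\<bar>g (s, x)\<bar> \<le> (K1 * bound + K2 * bound) * indicator {0..1} s" for s x
      by (simp add: g_def indicator_def)
  qed
  have "(\<integral>x. g (s, x) \<partial>\<nu>) = indicat_real {0..1} s * (c s * (\<integral>x. phi_t s x \<partial>\<nu>)) +
      indicat_real {0..1} s * (c' s * (\<integral>x. \<phi> s x \<partial>\<nu>))" for s
    using slice(1,2)[of s] by (cases "s \<in> {0..1}") (simp_all add: g_def)
  then have "(\<integral>s\<in>{0..1}. c s * (\<integral>x. phi_t s x \<partial>\<nu>) \<partial>lborel) + (\<integral>s\<in>{0..1}. c' s * (\<integral>x. \<phi> s x \<partial>\<nu>) \<partial>lborel)
      = (\<integral>s. (\<integral>x. g (s, x) \<partial>\<nu>) \<partial>lborel)"
    using si1 si2 unfolding set_lebesgue_integral_def set_integrable_def by simp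
  also have "\<dots> = (\<integral>x. (\<integral>s. g (s, x) \<partial>lborel) \<partial>\<nu>)"
    using Fubini_integral[of "\<lambda>s x. g (s, x)"] g_int by simp
  also have "\<dots> = 0"
    using integral_01_time_derivative[OF c c'] by (simp add: g_def)
  finally show "(\<integral>s\<in>{0..1}. c s * (\<integral>x. phi_t s x \<partial>\<nu>) \<partial>lborel) + (\<integral>s\<in>{0..1}. c' s * (\<integral>x. \<phi> s x \<partial>\<nu>) \<partial>lborel) = 0" .
qed

end

definition sum_measure :: "'a measure \<Rightarrow> 'a measure \<Rightarrow> 'a measure" where
  "sum_measure M N = measure_of (space M) (sets M) (\<lambda>A. emeasure M A + emeasure N A)"

lemma sets_sum_measure[simp]: "sets (sum_measure M N) = sets M"
  unfolding sum_measure_def by (simp add: sets_measure_of[OF sets.space_closed] sets.sigma_sets_eq)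

lemma space_sum_measure[simp]: "space (sum_measure M N) = space M"
  unfolding sum_measure_def by (simp add: space_measure_of[OF sets.space_closed])

lemma emeasure_sum_measure:
  assumes "sets N = sets M" "A \<in> sets M"
  shows "emeasure (sum_measure M N) A = emeasure M A + emeasure N A"
  unfolding sum_measure_def
proof (rule emeasure_measure_of_sigma)
  show "sigma_algebra (space M) (sets M)" by (rule sets.sigma_algebra_axioms)
  show "positive (sets M) (\<lambda>A. emeasure M A + emeasure N A)" by (simp add: positive_def)
  show "countably_additive (sets M) (\<lambda>A. emeasure M A + emeasure N A)"
  proof (rule countably_additiveI)
    fix F :: "nat \<Rightarrow> 'a set" assume F: "range F \<subseteq> sets M" "disjoint_family F" "\<Union> (range F) \<in> sets M"
    have "(\<Sum>i. emeasure M (F i) + emeasure N (F i)) = (\<Sum>i. emeasure M (F i)) + (\<Sum>i. emeasure N (F i))"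
      by (rule suminf_add[symmetric]) (rule summableI)+
    also have "\<dots> = emeasure M (\<Union> (range F)) + emeasure N (\<Union> (range F))"
      using suminf_emeasure[of F M] suminf_emeasure[of F N] F assms(1) by simp
    finally show "(\<Sum>i. emeasure M (F i) + emeasure N (F i)) = emeasure M (\<Union> (range F)) + emeasure N (\<Union> (range F))" .
  qed
qed (fact assms)

lemma finite_measure_sum_measure:
  assumes "finite_measure M" "finite_measure N" "sets N = sets M"
  shows "finite_measure (sum_measure M N)"
proof
  have e: "emeasure (sum_measure M N) (space M) = emeasure M (space M) + emeasure N (space M)"
    by (rule emeasure_sum_measure[OF assms(3) sets.top])
  have a: "emeasure M (space M) \<noteq> \<infinity>" using finite_measure.emeasure_finite[OF assms(1), of "space M"] by simp
  have b: "emeasure N (space M) \<noteq> \<infinity>" using finite_measure.emeasure_finite[OF assms(2), of "space M"] by simp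
  show "emeasure (sum_measure M N) (space (sum_measure M N)) \<noteq> \<infinity>"
    unfolding space_sum_measure e using a b by (simp add: ennreal_add_eq_top)
qed

lemma null_sets_sum_measure:
  assumes "sets N = sets M" "A \<in> null_sets (sum_measure M N)"
  shows "A \<in> null_sets M" "A \<in> null_sets N"
proof -
  have A: "A \<in> sets M" using assms(2) unfolding null_sets_def by simp
  have "emeasure (sum_measure M N) A = 0" using assms(2) unfolding null_sets_def by simp
  then have z: "emeasure M A + emeasure N A = 0" using emeasure_sum_measure[OF assms(1) A] by simp
  show "A \<in> null_sets M" using A z unfolding null_sets_def by simp
  show "A \<in> null_sets N" using A z assms(1) unfolding null_sets_def by simp
qed

lemma absolutely_continuous_sum_measure_left:
  assumes "sets N = sets M" shows "absolutely_continuous (sum_measure M N) M"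
  unfolding absolutely_continuous_def using null_sets_sum_measure[OF assms] by blast

lemma absolutely_continuous_sum_measure_right:
  assumes "sets N = sets M" shows "absolutely_continuous (sum_measure M N) N"
  unfolding absolutely_continuous_def using null_sets_sum_measure[OF assms] by blast

lemma absolutely_continuous_trans:
  assumes "absolutely_continuous M N" "absolutely_continuous N K" "sets N = sets M" "sets K = sets M"
  shows "absolutely_continuous M K"
  using assms unfolding absolutely_continuous_def by auto

lemma finite_real_density_exists:
  assumes M: "finite_measure M" and N: "finite_measure N" "sets N = sets M" "absolutely_continuous M N"
  shows "\<exists>f. f \<in> borel_measurable M \<and> (\<forall>x. f x \<ge> 0) \<and> density M (\<lambda>x. ennreal (f x)) = N"
proof -
  interpret M: finite_measure M by fact
  have sfN: "sigma_finite_measure N" using N(1) by (simp add: finite_measure.axioms(1))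
  define f where "f = (\<lambda>x. enn2real (RN_deriv M N x))"
  have "AE x in M. RN_deriv M N x \<noteq> \<infinity>" by (rule M.RN_deriv_finite[OF sfN N(3) N(2)])
  then have "AE x in M. ennreal (f x) = RN_deriv M N x"
    by eventually_elim (simp add: f_def less_top)
  then have "density M (\<lambda>x. ennreal (f x)) = density M (RN_deriv M N)"
    by (intro density_cong) (auto simp: f_def)
  also have "\<dots> = N" by (rule M.density_RN_deriv[OF N(3) N(2)])
  finally show ?thesis by (intro exI[of _ f]) (auto simp: f_def)
qed

lemma measure_density_lborel_integrable:
  fixes h :: "real \<Rightarrow> real"
  assumes h: "\<And>x. h x \<ge> 0" "integrable lborel h" and A: "A \<in> sets borel"
  shows "measure (density lborel (\<lambda>x. ennreal (h x))) A = (\<integral>x. indicator A x * h x \<partial>lborel)"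
proof -
  have [measurable]: "h \<in> borel_measurable borel" using h(2) by auto
  have i: "integrable lborel (\<lambda>x. indicator A x * h x)"
    using integrable_mult_indicator[OF _ h(2), of A] A by simp
  have "emeasure (density lborel (\<lambda>x. ennreal (h x))) A = (\<integral>\<^sup>+x. ennreal (h x) * indicator A x \<partial>lborel)"
    using A by (subst emeasure_density) auto
  also have "\<dots> = (\<integral>\<^sup>+x. ennreal (indicator A x * h x) \<partial>lborel)"
    by (intro nn_integral_cong) (auto split: split_indicator)
  also have "\<dots> = ennreal (\<integral>x. indicator A x * h x \<partial>lborel)"
    by (rule nn_integral_eq_integral[OF i]) (use h(1) in \<open>auto split: split_indicator\<close>)
  finally show ?thesis unfolding measure_def using h(1) by (simp add: integral_nonneg_AE)
qed

lemma fin_borel_density_lborel: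
  fixes h :: "real \<Rightarrow> real"
  assumes h: "\<And>x. h x \<ge> 0" "integrable lborel h"
  shows "fin_borel (density lborel (\<lambda>x. ennreal (h x)))"
  unfolding fin_borel_def
proof
  have [measurable]: "h \<in> borel_measurable borel" using h(2) by auto
  show "finite_measure (density lborel (\<lambda>x. ennreal (h x)))"
  proof
    have "emeasure (density lborel (\<lambda>x. ennreal (h x))) UNIV = ennreal (\<integral>x. h x \<partial>lborel)"
      using h by (subst emeasure_density) (auto intro!: nn_integral_eq_integral)
    then show "emeasure (density lborel (\<lambda>x. ennreal (h x))) (space (density lborel (\<lambda>x. ennreal (h x)))) \<noteq> \<infinity>"
      by simp
  qed
qed simp

definition signed_density :: "(real \<Rightarrow> real) \<Rightarrow> real measure \<times> real measure" where
  "signed_density g = (density lborel (\<lambda>x. ennreal (max 0 (g x))), density lborel (\<lambda>x. ennreal (max 0 (- g x))))"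

context
  fixes g :: "real \<Rightarrow> real"
  assumes g: "integrable lborel g"
begin

lemma integrable_max_0_density: "integrable lborel (\<lambda>x. max 0 (g x))" "integrable lborel (\<lambda>x. max 0 (- g x))"
  by (rule integrable_dominated[of _ "\<lambda>x. \<bar>g x\<bar>"]; use g in auto)+

lemma fin_borel_signed_density: "fin_borel (fst (signed_density g))" "fin_borel (snd (signed_density g))"
  unfolding signed_density_def fst_conv snd_conv
  by (rule fin_borel_density_lborel; simp add: integrable_max_0_density)+

lemma sm_val_signed_density:
  assumes A: "A \<in> sets borel"
  shows "sm_val (signed_density g) A = (\<integral>x\<in>A. g x \<partial>lborel)"
proof -
  note i = integrable_max_0_density
  have "sm_val (signed_density g) A
      = (\<integral>x. indicator A x * max 0 (g x) \<partial>lborel) - (\<integral>x. indicator A x * max 0 (- g x) \<partial>lborel)"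
    unfolding sm_val_def signed_density_def
    using measure_density_lborel_integrable[OF _ i(1) A] measure_density_lborel_integrable[OF _ i(2) A] by simp
  also have "\<dots> = (\<integral>x. indicator A x * max 0 (g x) - indicator A x * max 0 (- g x) \<partial>lborel)"
    using integrable_mult_indicator[OF _ i(1), of A] integrable_mult_indicator[OF _ i(2), of A] A
    by (subst Bochner_Integration.integral_diff) auto
  also have "\<dots> = (\<integral>x\<in>A. g x \<partial>lborel)"
    unfolding set_lebesgue_integral_def by (intro Bochner_Integration.integral_cong) (auto split: split_indicator)
  finally show ?thesis .
qed

lemma sm_int_signed_density:
  assumes [measurable]: "f \<in> borel_measurable borel" and i: "integrable lborel (\<lambda>x. g x * f x)"
  shows "sm_int (signed_density g) f = (\<integral>x. g x * f x \<partial>lborel)"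
proof -
  have [measurable]: "g \<in> borel_measurable borel" using g by auto
  have ia: "integrable lborel (\<lambda>x. \<bar>g x * f x\<bar>)" using i by (rule integrable_abs)
  have "integrable lborel (\<lambda>x. max 0 (g x) * f x)" "integrable lborel (\<lambda>x. max 0 (- g x) * f x)"
    by (rule integrable_dominated[OF ia]; auto simp: abs_mult intro!: mult_right_mono)+
  moreover have "sm_int (signed_density g) f = (\<integral>x. max 0 (g x) * f x \<partial>lborel) - (\<integral>x. max 0 (- g x) * f x \<partial>lborel)"
    unfolding sm_int_def signed_density_def fst_conv snd_conv by (subst (1 2) integral_density) auto
  ultimately have "sm_int (signed_density g) f = (\<integral>x. max 0 (g x) * f x - max 0 (- g x) * f x \<partial>lborel)"
    by simp
  also have "\<dots> = (\<integral>x. g x * f x \<partial>lborel)"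
    by (intro Bochner_Integration.integral_cong) (auto simp: max_def algebra_simps)
  finally show ?thesis .
qed

end

definition alpha :: "real \<Rightarrow> real" where "alpha s = (1 - s)^3 * (1 + 3 * s)"
definition beta :: "real \<Rightarrow> real" where "beta s = 6 * s^2 * (1 - s)^2"
definition gamma :: "real \<Rightarrow> real" where "gamma s = s^3 * (4 - 3 * s)"
definition alpha' :: "real \<Rightarrow> real" where "alpha' s = - 12 * s * (1 - s)^2"
definition beta' :: "real \<Rightarrow> real" where "beta' s = 12 * s * (1 - s) * (1 - 2 * s)"
definition gamma' :: "real \<Rightarrow> real" where "gamma' s = 12 * s^2 * (1 - s)"

lemma alpha_beta_gamma_sum: "alpha s + beta s + gamma s = 1"
  unfolding alpha_def beta_def gamma_def by (simp add: algebra_simps power2_eq_square power3_eq_cube)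

lemma alpha'_beta'_gamma'_sum: "alpha' s + beta' s + gamma' s = 0"
  unfolding alpha'_def beta'_def gamma'_def by (simp add: algebra_simps power2_eq_square)

lemma alpha_nonneg: "s \<in> {0..1} \<Longrightarrow> alpha s \<ge> 0"
  and beta_nonneg: "beta s \<ge> 0"
  and gamma_nonneg: "s \<in> {0..1} \<Longrightarrow> gamma s \<ge> 0"
  unfolding alpha_def beta_def gamma_def by auto

lemma beta_pos: "s \<in> {0<..<1} \<Longrightarrow> beta s > 0"
  unfolding beta_def by auto

lemma coef_endpoints: "alpha 0 = 1" "beta 0 = 0" "gamma 0 = 0" "alpha 1 = 0" "beta 1 = 0" "gamma 1 = 1"
  by (simp_all add: alpha_def beta_def gamma_def)

lemma alpha_has_derivative: "(alpha has_real_derivative alpha' s) (at s)"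
  unfolding alpha_def
  by (rule derivative_eq_intros refl)+ (simp add: alpha'_def algebra_simps power2_eq_square power3_eq_cube)

lemma beta_has_derivative: "(beta has_real_derivative beta' s) (at s)"
  unfolding beta_def
  by (rule derivative_eq_intros refl)+ (simp add: beta'_def algebra_simps power2_eq_square)

lemma gamma_has_derivative: "(gamma has_real_derivative gamma' s) (at s)"
  unfolding gamma_def
  by (rule derivative_eq_intros refl)+ (simp add: gamma'_def algebra_simps power2_eq_square power3_eq_cube)

lemma continuous_on_coefs:
  "continuous_on UNIV alpha" "continuous_on UNIV beta" "continuous_on UNIV gamma"
  "continuous_on UNIV alpha'" "continuous_on UNIV beta'" "continuous_on UNIV gamma'"
  unfolding alpha_def beta_def gamma_def alpha'_def beta'_def gamma'_def by (intro continuous_intros)+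

text \<open>The flux is driven by alpha' and gamma', while the curve always carries the mass
  beta s \<cdot> eta; these bounds are what keep the action finite.\<close>

lemma alpha'_sq_le_beta: "s \<in> {0..1} \<Longrightarrow> (alpha' s)\<^sup>2 \<le> 24 * beta s"
  and gamma'_sq_le_beta: "s \<in> {0..1} \<Longrightarrow> (gamma' s)\<^sup>2 \<le> 24 * beta s"
proof -
  assume s: "s \<in> {0..1}"
  have "(alpha' s)\<^sup>2 = 24 * beta s * (1 - s)\<^sup>2" "(gamma' s)\<^sup>2 = 24 * beta s * s\<^sup>2"
    unfolding alpha'_def gamma'_def beta_def by (simp_all add: algebra_simps power2_eq_square)
  moreover have "(1 - s)\<^sup>2 \<le> 1" "s\<^sup>2 \<le> 1" using s by (simp_all add: power_le_one)
  ultimately show "(alpha' s)\<^sup>2 \<le> 24 * beta s" "(gamma' s)\<^sup>2 \<le> 24 * beta s"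
    using beta_nonneg[of s] by (simp_all add: mult_left_le)
qed

section \<open>The interpolating curve\<close>

locale interpolation =
  fixes \<mu>0 \<mu>1 :: "real measure" and q :: real
  assumes P2c_\<mu>0: "P2c \<mu>0" and P2c_\<mu>1: "P2c \<mu>1" and cx_le_\<mu>0_\<mu>1: "cx_le \<mu>0 \<mu>1"
    and q_gt_4: "q > 4" and moment_\<mu>1: "(\<integral>\<^sup>+ x. ennreal (\<bar>x\<bar> powr q) \<partial>\<mu>1) < \<infinity>"
begin

text \<open>The tail exponent of the intermediate measure: it has a finite q-th moment
  (q < tail - 1), while the squared call-function differences, which decay like
  (1 + |x|) powr (2 - 2q), are still integrable against its inverse density
  (tail + 2 - 2q < -1). Both need q > 4.\<close>

definition "tail = (3 * q - 2) / 2"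

definition "eta = powerlaw tail"

lemma tail_gt_5: "tail > 5" and q_lt_tail: "q < tail - 1"
  using q_gt_4 by (simp_all add: tail_def field_simps)

lemma P2c_eta: "P2c eta"
  using P2c_powerlaw tail_gt_5 by (simp add: eta_def)

lemma integrable_moment_eta: "integrable eta (\<lambda>y. (1 + \<bar>y\<bar>) powr q)"
  unfolding eta_def using tail_gt_5 q_lt_tail by (intro powerlaw_integrable_moment) auto

lemma integrable_moment_\<mu>1: "integrable \<mu>1 (\<lambda>y. (1 + \<bar>y\<bar>) powr q)"
  using P2c_integrable_moment[OF P2c_\<mu>1 _ moment_\<mu>1] q_gt_4 by simp

definition "ref = sum_measure (sum_measure \<mu>0 \<mu>1) eta"

lemma sets_ref [simp]: "sets ref = sets borel" and space_ref [simp]: "space ref = UNIV"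
  using P2c_sets[OF P2c_\<mu>0] P2c_space[OF P2c_\<mu>0] by (simp_all add: ref_def)

lemma measurable_ref_eq: "measurable ref N = measurable borel N"
  by (rule measurable_cong_sets) simp_all

lemma finite_measure_ref: "finite_measure ref"
  unfolding ref_def
  by (intro finite_measure_sum_measure finite_measure_P2c P2c_\<mu>0 P2c_\<mu>1 P2c_eta)
     (simp_all add: P2c_sets P2c_\<mu>0 P2c_\<mu>1 P2c_eta)

lemma absolutely_continuous_ref:
  "absolutely_continuous ref \<mu>0" "absolutely_continuous ref \<mu>1" "absolutely_continuous ref eta"
proof -
  have s01: "sets \<mu>1 = sets \<mu>0" and s: "sets eta = sets (sum_measure \<mu>0 \<mu>1)"
    using P2c_sets P2c_\<mu>0 P2c_\<mu>1 P2c_eta by simp_all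
  have a: "absolutely_continuous ref (sum_measure \<mu>0 \<mu>1)"
    unfolding ref_def by (rule absolutely_continuous_sum_measure_left[OF s])
  show "absolutely_continuous ref eta"
    unfolding ref_def by (rule absolutely_continuous_sum_measure_right[OF s])
  show "absolutely_continuous ref \<mu>0"
    by (rule absolutely_continuous_trans[OF a absolutely_continuous_sum_measure_left[OF s01]])
       (simp_all add: ref_def P2c_sets P2c_\<mu>0)
  show "absolutely_continuous ref \<mu>1"
    by (rule absolutely_continuous_trans[OF a absolutely_continuous_sum_measure_right[OF s01]])
       (simp_all add: ref_def P2c_sets P2c_\<mu>0 P2c_\<mu>1)
qed

definition "rn_density \<nu> = (SOME f. f \<in> borel_measurable ref \<and> (\<forall>x. f x \<ge> 0) \<and> density ref (\<lambda>x. ennreal (f x)) = \<nu>)"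

lemma rn_density:
  assumes "P2c \<nu>" "absolutely_continuous ref \<nu>"
  shows "rn_density \<nu> \<in> borel_measurable borel" "\<And>x. rn_density \<nu> x \<ge> 0"
    "density ref (\<lambda>x. ennreal (rn_density \<nu> x)) = \<nu>"
proof -
  have "\<exists>f. f \<in> borel_measurable ref \<and> (\<forall>x. f x \<ge> 0) \<and> density ref (\<lambda>x. ennreal (f x)) = \<nu>"
    by (rule finite_real_density_exists[OF finite_measure_ref finite_measure_P2c[OF assms(1)] _ assms(2)])
       (simp add: P2c_sets[OF assms(1)])
  from someI_ex[OF this] show "rn_density \<nu> \<in> borel_measurable borel" "\<And>x. rn_density \<nu> x \<ge> 0"
    "density ref (\<lambda>x. ennreal (rn_density \<nu> x)) = \<nu>"
    unfolding rn_density_def measurable_ref_eq by auto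
qed

definition "f0 = rn_density \<mu>0"
definition "f1 = rn_density \<mu>1"
definition "fe = rn_density eta"

lemmas f0 = rn_density[OF P2c_\<mu>0 absolutely_continuous_ref(1), folded f0_def]
lemmas f1 = rn_density[OF P2c_\<mu>1 absolutely_continuous_ref(2), folded f1_def]
lemmas fe = rn_density[OF P2c_eta absolutely_continuous_ref(3), folded fe_def]

lemma borel_measurable_densities [measurable]:
  "f0 \<in> borel_measurable borel" "f1 \<in> borel_measurable borel" "fe \<in> borel_measurable borel"
  using f0(1) f1(1) fe(1) .

definition "curve_density s x = alpha s * f0 x + beta s * fe x + gamma s * f1 x"

definition "curve s = density ref (\<lambda>x. ennreal (curve_density s x))"

lemma curve_density_nonneg: "s \<in> {0..1} \<Longrightarrow> curve_density s x \<ge> 0"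
  unfolding curve_density_def using alpha_nonneg beta_nonneg gamma_nonneg f0(2) f1(2) fe(2)
  by (intro add_nonneg_nonneg mult_nonneg_nonneg) auto

lemma borel_measurable_curve_density [measurable]: "curve_density s \<in> borel_measurable borel"
  unfolding curve_density_def by measurable

lemma curve_0: "curve 0 = \<mu>0" and curve_1: "curve 1 = \<mu>1"
  using f0(3) f1(3) by (simp_all add: curve_def curve_density_def coef_endpoints)

lemma sets_curve [simp]: "sets (curve s) = sets borel" and space_curve [simp]: "space (curve s) = UNIV"
  by (simp_all add: curve_def)

lemma integral_density_ref:
  assumes "P2c \<nu>" "absolutely_continuous ref \<nu>" "f \<in> borel_measurable borel"
  shows "integrable \<nu> f \<longleftrightarrow> integrable ref (\<lambda>x. rn_density \<nu> x * f x)"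
    and "integral\<^sup>L \<nu> f = (\<integral>x. rn_density \<nu> x * f x \<partial>ref)"
  using integrable_density_iff_mult[of "rn_density \<nu>" ref f] rn_density[OF assms(1,2)] assms(3)
  by (simp_all add: measurable_ref_eq)

lemma integral_curve:
  assumes s: "s \<in> {0..1}" and [measurable]: "f \<in> borel_measurable borel"
    and i: "integrable \<mu>0 f" "integrable eta f" "integrable \<mu>1 f"
  shows "integrable (curve s) f"
    and "integral\<^sup>L (curve s) f = alpha s * integral\<^sup>L \<mu>0 f + beta s * integral\<^sup>L eta f + gamma s * integral\<^sup>L \<mu>1 f"
proof -
  note d0 = integral_density_ref[OF P2c_\<mu>0 absolutely_continuous_ref(1), folded f0_def]
  note d1 = integral_density_ref[OF P2c_\<mu>1 absolutely_continuous_ref(2), folded f1_def]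
  note de = integral_density_ref[OF P2c_eta absolutely_continuous_ref(3), folded fe_def]
  have e: "(\<lambda>x. curve_density s x * f x) = (\<lambda>x. alpha s * (f0 x * f x) + beta s * (fe x * f x) + gamma s * (f1 x * f x))"
    by (auto simp: curve_density_def algebra_simps)
  note dc = integrable_density_iff_mult[of "curve_density s" ref f, folded curve_def]
  have "integrable ref (\<lambda>x. curve_density s x * f x)"
    unfolding e using i d0(1) d1(1) de(1) by simp
  then show "integrable (curve s) f"
    using dc(1) curve_density_nonneg[OF s] by (simp add: measurable_ref_eq)
  have "integral\<^sup>L (curve s) f = (\<integral>x. curve_density s x * f x \<partial>ref)"
    using dc(2) curve_density_nonneg[OF s] by (simp add: measurable_ref_eq)
  also have "\<dots> = alpha s * (\<integral>x. f0 x * f x \<partial>ref) + beta s * (\<integral>x. fe x * f x \<partial>ref) + gamma s * (\<integral>x. f1 x * f x \<partial>ref)"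
    unfolding e using i d0(1) d1(1) de(1) by simp
  finally show "integral\<^sup>L (curve s) f = alpha s * integral\<^sup>L \<mu>0 f + beta s * integral\<^sup>L eta f + gamma s * integral\<^sup>L \<mu>1 f"
    using d0(2) d1(2) de(2) by simp
qed

lemma nn_integral_curve:
  assumes s: "s \<in> {0..1}" and [measurable]: "g \<in> borel_measurable borel"
  shows "integral\<^sup>N (curve s) g = alpha s * integral\<^sup>N \<mu>0 g + beta s * integral\<^sup>N eta g + gamma s * integral\<^sup>N \<mu>1 g"
proof -
  have nd: "integral\<^sup>N (density ref (\<lambda>x. ennreal (h x))) g = (\<integral>\<^sup>+x. ennreal (h x) * g x \<partial>ref)"
    if "h \<in> borel_measurable borel" for h
    by (rule nn_integral_density) (use that in \<open>auto simp: measurable_ref_eq\<close>)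
  have "ennreal (curve_density s x) = alpha s * ennreal (f0 x) + beta s * ennreal (fe x) + gamma s * ennreal (f1 x)" for x
  proof -
    have "0 \<le> alpha s * f0 x" "0 \<le> beta s * fe x" "0 \<le> gamma s * f1 x"
      using alpha_nonneg[OF s] beta_nonneg gamma_nonneg[OF s] f0(2)[of x] f1(2)[of x] fe(2)[of x] by auto
    then have "ennreal (curve_density s x) = ennreal (alpha s * f0 x) + ennreal (beta s * fe x) + ennreal (gamma s * f1 x)"
      by (simp add: curve_density_def)
    then show ?thesis
      using alpha_nonneg[OF s] beta_nonneg gamma_nonneg[OF s] f0(2)[of x] f1(2)[of x] fe(2)[of x]
      by (simp add: ennreal_mult)
  qed
  then have "integral\<^sup>N (curve s) g = (\<integral>\<^sup>+x. alpha s * (ennreal (f0 x) * g x) + beta s * (ennreal (fe x) * g x)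
      + gamma s * (ennreal (f1 x) * g x) \<partial>ref)"
    unfolding curve_def nd[OF borel_measurable_curve_density] by (simp add: distrib_right mult.assoc)
  also have "\<dots> = alpha s * (\<integral>\<^sup>+x. ennreal (f0 x) * g x \<partial>ref) + beta s * (\<integral>\<^sup>+x. ennreal (fe x) * g x \<partial>ref)
      + gamma s * (\<integral>\<^sup>+x. ennreal (f1 x) * g x \<partial>ref)"
    by (simp add: nn_integral_add nn_integral_cmult measurable_ref_eq)
  finally show ?thesis using nd[of f0] nd[of f1] nd[of fe] f0(3) f1(3) fe(3) by simp
qed

lemma P2c_curve: assumes s: "s \<in> {0..1}" shows "P2c (curve s)"
proof -
  have one: "integral\<^sup>N \<nu> (\<lambda>x. 1) = 1" if "P2c \<nu>" for \<nu>
    using prob_space.emeasure_space_1[OF P2c_prob[OF that]] P2c_space[OF that] by simp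
  have "emeasure (curve s) (space (curve s)) = ennreal (alpha s + beta s + gamma s)"
    using nn_integral_curve[OF s, of "\<lambda>x. 1"] one[OF P2c_\<mu>0] one[OF P2c_\<mu>1] one[OF P2c_eta]
      alpha_nonneg[OF s] beta_nonneg[of s] gamma_nonneg[OF s]
    by (simp add: ennreal_plus[symmetric] del: ennreal_plus)
  then have "prob_space (curve s)" by (intro prob_spaceI) (simp add: alpha_beta_gamma_sum)
  moreover have "integral\<^sup>N (curve s) (\<lambda>x. ennreal (x\<^sup>2)) < \<infinity>"
    using nn_integral_curve[OF s, of "\<lambda>x. ennreal (x\<^sup>2)"] P2c_\<mu>0 P2c_\<mu>1 P2c_eta
    by (simp add: P2c_def ennreal_mult_less_top)
  moreover have "integral\<^sup>L (curve s) (\<lambda>x. x) = 0"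
    using integral_curve(2)[OF s _ P2c_integrable_id[OF P2c_\<mu>0] P2c_integrable_id[OF P2c_eta]
        P2c_integrable_id[OF P2c_\<mu>1]] P2c_mean[OF P2c_\<mu>0] P2c_mean[OF P2c_\<mu>1] P2c_mean[OF P2c_eta]
    by simp
  ultimately show ?thesis by (simp add: P2c_def)
qed

lemma weakly_continuous_curve:
  fixes f :: "real \<Rightarrow> real"
  assumes "continuous_on UNIV f" "bounded (range f)"
  shows "continuous_on {0..1} (\<lambda>s. integral\<^sup>L (curve s) f)"
proof -
  obtain C where C: "\<And>x. \<bar>f x\<bar> \<le> C" using assms(2) unfolding bounded_iff by auto
  have [measurable]: "f \<in> borel_measurable borel" by (rule borel_measurable_continuous_onI[OF assms(1)])
  have i: "integrable \<nu> f" if "P2c \<nu>" for \<nu>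
    using finite_measure.integrable_const_bound[OF finite_measure_P2c[OF that], of f C] C
    by (simp add: measurable_P2c_eq[OF that])
  have "continuous_on {0..1} (\<lambda>s. alpha s * integral\<^sup>L \<mu>0 f + beta s * integral\<^sup>L eta f + gamma s * integral\<^sup>L \<mu>1 f)"
    by (intro continuous_intros continuous_on_subset[OF continuous_on_coefs(1)]
        continuous_on_subset[OF continuous_on_coefs(2)] continuous_on_subset[OF continuous_on_coefs(3)]) auto
  then show ?thesis
    by (rule continuous_on_cong[THEN iffD1, rotated 2])
       (auto intro!: integral_curve(2)[symmetric] i P2c_\<mu>0 P2c_\<mu>1 P2c_eta)
qed

subsection \<open>The flux and the continuity equation\<close>

definition "decay_const = (\<integral>y. (1 + \<bar>y\<bar>) powr q \<partial>\<mu>1) + (\<integral>y. (1 + \<bar>y\<bar>) powr q \<partial>eta)"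

definition "G0 x = call_fun \<mu>0 x - call_fun eta x"
definition "G1 x = call_fun \<mu>1 x - call_fun eta x"

lemma abs_G0_le: "\<bar>G0 x\<bar> \<le> decay_const * (1 + \<bar>x\<bar>) powr (1 - q)"
  and abs_G1_le: "\<bar>G1 x\<bar> \<le> decay_const * (1 + \<bar>x\<bar>) powr (1 - q)"
  using call_fun_diff_decay[OF P2c_\<mu>0 cx_le_\<mu>0_\<mu>1 P2c_\<mu>1 integrable_moment_\<mu>1 P2c_eta integrable_moment_eta, of x]
    call_fun_diff_decay[OF P2c_\<mu>1 cx_le_refl P2c_\<mu>1 integrable_moment_\<mu>1 P2c_eta integrable_moment_eta, of x] q_gt_4
  by (simp_all add: G0_def G1_def decay_const_def)

lemma borel_measurable_G [measurable]: "G0 \<in> borel_measurable borel" "G1 \<in> borel_measurable borel"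
  using borel_measurable_call_fun[OF P2c_\<mu>0] borel_measurable_call_fun[OF P2c_\<mu>1]
    borel_measurable_call_fun[OF P2c_eta]
  unfolding G0_def[abs_def] G1_def[abs_def] by measurable

lemma integrable_G: "integrable lborel G0" "integrable lborel G1"
  using q_gt_4 abs_G0_le abs_G1_le
  by (intro integrable_if_powr_decay[of "q - 1" _ decay_const]; simp)+

text \<open>The second derivative of call_fun \<nu> is \<nu>, and beta' = - alpha' - gamma'.\<close>

definition "flux_density s x = alpha' s * G0 x + gamma' s * G1 x"

definition "flux s = signed_density (flux_density s)"

lemma borel_measurable_flux_density [measurable]: "flux_density s \<in> borel_measurable borel"
  unfolding flux_density_def[abs_def] by measurable

lemma integrable_flux_density: "integrable lborel (flux_density s)"
  unfolding flux_density_def[abs_def] using integrable_G by auto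

lemma borel_measurable_sm_val_flux:
  assumes A: "A \<in> sets borel"
  shows "(\<lambda>s. sm_val (flux s) A) \<in> borel_measurable (restrict_space borel {0..1})"
proof -
  have i: "set_integrable lborel A G0" "set_integrable lborel A G1"
    unfolding set_integrable_def using A integrable_mult_indicator[OF _ integrable_G(1), of A]
      integrable_mult_indicator[OF _ integrable_G(2), of A] by simp_all
  have "sm_val (flux s) A = alpha' s * (\<integral>x\<in>A. G0 x \<partial>lborel) + gamma' s * (\<integral>x\<in>A. G1 x \<partial>lborel)" for s
  proof -
    have "sm_val (flux s) A = (\<integral>x\<in>A. alpha' s * G0 x + gamma' s * G1 x \<partial>lborel)"
      unfolding flux_def using sm_val_signed_density[OF integrable_flux_density A]
      by (simp add: flux_density_def)
    also have "\<dots> = (\<integral>x\<in>A. alpha' s * G0 x \<partial>lborel) + (\<integral>x\<in>A. gamma' s * G1 x \<partial>lborel)"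
      using i by (intro set_integral_add(2)) (auto intro: set_integrable_mult_right)
    finally show ?thesis by (simp add: set_integral_mult_right)
  qed
  moreover have "(\<lambda>s. alpha' s * (\<integral>x\<in>A. G0 x \<partial>lborel) + gamma' s * (\<integral>x\<in>A. G1 x \<partial>lborel)) \<in> borel_measurable borel"
    using borel_measurable_continuous_onI[OF continuous_on_coefs(4)]
      borel_measurable_continuous_onI[OF continuous_on_coefs(6)] by measurable
  ultimately show ?thesis by (simp add: measurable_restrict_space1)
qed

lemma integral_curve_phi_t:
  assumes "test_function \<phi>" and s: "s \<in> {0..1}"
  shows "(\<integral>x. pd True \<phi> s x \<partial>curve s) = alpha s * (\<integral>x. pd True \<phi> s x \<partial>\<mu>0)
    + beta s * (\<integral>x. pd True \<phi> s x \<partial>eta) + gamma s * (\<integral>x. pd True \<phi> s x \<partial>\<mu>1)"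
proof -
  interpret test_function \<phi> by fact
  show ?thesis
    using integral_curve(2)[OF s _ integrable_phi_slice(2)[OF P2c_\<mu>0 s] integrable_phi_slice(2)[OF P2c_eta s]
        integrable_phi_slice(2)[OF P2c_\<mu>1 s]]
    by (simp add: phi_t_def[symmetric])
qed

lemma sm_int_flux_phi_xx:
  assumes "test_function \<phi>" and s: "s \<in> {0..1}"
  shows "sm_int (flux s) (\<lambda>x. pd False (pd False \<phi>) s x) = alpha' s * (\<integral>x. \<phi> s x \<partial>\<mu>0)
    + beta' s * (\<integral>x. \<phi> s x \<partial>eta) + gamma' s * (\<integral>x. \<phi> s x \<partial>\<mu>1)"
proof -
  interpret test_function \<phi> by fact
  note i = integrable_phi_xx_call_fun[OF P2c_\<mu>0 s] integrable_phi_xx_call_fun[OF P2c_\<mu>1 s]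
    integrable_phi_xx_call_fun[OF P2c_eta s]
  have e: "flux_density s x * phi_xx s x = alpha' s * (phi_xx s x * call_fun \<mu>0 x - phi_xx s x * call_fun eta x)
      + gamma' s * (phi_xx s x * call_fun \<mu>1 x - phi_xx s x * call_fun eta x)" for x
    by (simp add: flux_density_def G0_def G1_def algebra_simps)
  have "sm_int (flux s) (phi_xx s) = (\<integral>x. flux_density s x * phi_xx s x \<partial>lborel)"
    unfolding flux_def using i by (intro sm_int_signed_density integrable_flux_density) (simp_all add: e)
  also have "\<dots> = alpha' s * ((\<integral>x. \<phi> s x \<partial>\<mu>0) - (\<integral>x. \<phi> s x \<partial>eta))
      + gamma' s * ((\<integral>x. \<phi> s x \<partial>\<mu>1) - (\<integral>x. \<phi> s x \<partial>eta))"
    unfolding e using i integral_phi_xx_call_fun[OF P2c_\<mu>0 s] integral_phi_xx_call_fun[OF P2c_\<mu>1 s]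
      integral_phi_xx_call_fun[OF P2c_eta s] by simp
  also have "\<dots> = alpha' s * (\<integral>x. \<phi> s x \<partial>\<mu>0) + beta' s * (\<integral>x. \<phi> s x \<partial>eta) + gamma' s * (\<integral>x. \<phi> s x \<partial>\<mu>1)"
  proof -
    have "beta' s = - alpha' s - gamma' s" using alpha'_beta'_gamma'_sum[of s] by linarith
    then show ?thesis by (simp only:) (simp add: algebra_simps)
  qed
  finally show ?thesis by (simp add: phi_xx_def)
qed

lemma continuity_equation:
  assumes "test_fun \<phi>"
  shows "set_integrable lborel {0..1} (\<lambda>s. \<integral>x. pd True \<phi> s x \<partial>curve s)"
    and "set_integrable lborel {0..1} (\<lambda>s. sm_int (flux s) (\<lambda>x. pd False (pd False \<phi>) s x))"
    and "(\<integral>s\<in>{0..1}. (\<integral>x. pd True \<phi> s x \<partial>curve s) \<partial>lborel) +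
         (\<integral>s\<in>{0..1}. sm_int (flux s) (\<lambda>x. pd False (pd False \<phi>) s x) \<partial>lborel) = 0"
proof -
  interpret test_function \<phi> using assms by unfold_locales
  note T0 = time_identity[OF P2c_\<mu>0 alpha_has_derivative continuous_on_coefs(4)]
  note Te = time_identity[OF P2c_eta beta_has_derivative continuous_on_coefs(5)]
  note T1 = time_identity[OF P2c_\<mu>1 gamma_has_derivative continuous_on_coefs(6)]
  let ?A = "\<lambda>s. alpha s * (\<integral>x. phi_t s x \<partial>\<mu>0) + beta s * (\<integral>x. phi_t s x \<partial>eta) + gamma s * (\<integral>x. phi_t s x \<partial>\<mu>1)"
  let ?B = "\<lambda>s. alpha' s * (\<integral>x. \<phi> s x \<partial>\<mu>0) + beta' s * (\<integral>x. \<phi> s x \<partial>eta) + gamma' s * (\<integral>x. \<phi> s x \<partial>\<mu>1)"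
  have A: "s \<in> {0..1} \<Longrightarrow> (\<integral>x. pd True \<phi> s x \<partial>curve s) = ?A s" for s
    using integral_curve_phi_t[OF test_function_axioms] by (simp add: phi_t_def)
  have B: "s \<in> {0..1} \<Longrightarrow> sm_int (flux s) (\<lambda>x. pd False (pd False \<phi>) s x) = ?B s" for s
    using sm_int_flux_phi_xx[OF test_function_axioms] by simp
  have "set_integrable lborel {0..1} ?A" "set_integrable lborel {0..1} ?B"
    using T0(1,2) Te(1,2) T1(1,2) by (intro set_integral_add(1); simp)+
  moreover have "set_integrable lborel {0..1} (\<lambda>s. \<integral>x. pd True \<phi> s x \<partial>curve s) = set_integrable lborel {0..1} ?A"
    "set_integrable lborel {0..1} (\<lambda>s. sm_int (flux s) (\<lambda>x. pd False (pd False \<phi>) s x)) = set_integrable lborel {0..1} ?B"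
    by (rule set_integrable_cong; simp add: A B)+
  ultimately show "set_integrable lborel {0..1} (\<lambda>s. \<integral>x. pd True \<phi> s x \<partial>curve s)"
    and "set_integrable lborel {0..1} (\<lambda>s. sm_int (flux s) (\<lambda>x. pd False (pd False \<phi>) s x))"
    by simp_all
  have "(\<integral>s\<in>{0..1}. (\<integral>x. pd True \<phi> s x \<partial>curve s) \<partial>lborel) = (\<integral>s\<in>{0..1}. ?A s \<partial>lborel)"
    "(\<integral>s\<in>{0..1}. sm_int (flux s) (\<lambda>x. pd False (pd False \<phi>) s x) \<partial>lborel) = (\<integral>s\<in>{0..1}. ?B s \<partial>lborel)"
    using A B by (auto intro: set_lebesgue_integral_cong)
  moreover have "(\<integral>s\<in>{0..1}. ?A s \<partial>lborel) + (\<integral>s\<in>{0..1}. ?B s \<partial>lborel) = 0"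
    using T0 Te T1 by (simp add: set_integral_add)
  ultimately show "(\<integral>s\<in>{0..1}. (\<integral>x. pd True \<phi> s x \<partial>curve s) \<partial>lborel) +
      (\<integral>s\<in>{0..1}. sm_int (flux s) (\<lambda>x. pd False (pd False \<phi>) s x) \<partial>lborel) = 0"
    by simp
qed

subsection \<open>The action\<close>

definition "eta_density = powerlaw_density tail"

lemma eta_density_pos: "eta_density x > 0"
  using powerlaw_density_pos tail_gt_5 by (simp add: eta_density_def)

lemma borel_measurable_eta_density [measurable]: "eta_density \<in> borel_measurable borel"
  unfolding eta_density_def by measurable

lemma eta_eq_density: "eta = density lborel (\<lambda>x. ennreal (eta_density x))"
  by (simp add: eta_def powerlaw_def eta_density_def)

lemma integral_fe_ref:
  assumes [measurable]: "k \<in> borel_measurable borel"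
  shows "integrable ref (\<lambda>x. fe x * k x) \<longleftrightarrow> integrable lborel (\<lambda>x. eta_density x * k x)"
    and "(\<integral>x. fe x * k x \<partial>ref) = (\<integral>x. eta_density x * k x \<partial>lborel)"
  using integral_density_ref[OF P2c_eta absolutely_continuous_ref(3) assms, folded fe_def]
    integrable_density_iff_mult[of eta_density lborel k, folded eta_eq_density] eta_density_pos
  by (simp_all add: less_imp_le)

lemma nn_integral_fe_ref:
  assumes [measurable]: "k \<in> borel_measurable borel"
  shows "(\<integral>\<^sup>+x. ennreal (fe x) * k x \<partial>ref) = (\<integral>\<^sup>+x. ennreal (eta_density x) * k x \<partial>lborel)"
proof -
  have "(\<integral>\<^sup>+x. ennreal (fe x) * k x \<partial>ref) = integral\<^sup>N eta k"
    using nn_integral_density[of "\<lambda>x. ennreal (fe x)" ref k] fe(3) by (simp add: measurable_ref_eq)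
  also have "\<dots> = (\<integral>\<^sup>+x. ennreal (eta_density x) * k x \<partial>lborel)"
    unfolding eta_eq_density by (subst nn_integral_density) auto
  finally show ?thesis .
qed

text \<open>The density of flux s with respect to curve s: flux s has density
  flux_density s / eta_density with respect to eta, and eta has density
  fe / curve_density s with respect to curve s.\<close>

definition "flux_rate s x = (if curve_density s x = 0 then 0
  else fe x * (flux_density s x / eta_density x) / curve_density s x)"

lemma borel_measurable_flux_rate [measurable]: "flux_rate s \<in> borel_measurable borel"
  unfolding flux_rate_def[abs_def] by measurable

lemma beta_fe_le_curve_density: "s \<in> {0..1} \<Longrightarrow> beta s * fe x \<le> curve_density s x"
  unfolding curve_density_def using alpha_nonneg gamma_nonneg f0(2)[of x] f1(2)[of x]
  by (simp add: add_nonneg_nonneg)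

lemma curve_density_mult_flux_rate:
  assumes s: "s \<in> {0<..<1}"
  shows "curve_density s x * flux_rate s x = fe x * (flux_density s x / eta_density x)"
proof (cases "curve_density s x = 0")
  case True
  then have "beta s * fe x \<le> 0" using beta_fe_le_curve_density[of s x] s by simp
  then have "fe x = 0" using beta_pos[OF s] fe(2)[of x] by (simp add: mult_le_0_iff)
  then show ?thesis using True by (simp add: flux_rate_def)
qed (simp add: flux_rate_def)

lemma curve_density_mult_flux_rate_sq_le:
  assumes s: "s \<in> {0<..<1}"
  shows "curve_density s x * (flux_rate s x)\<^sup>2 \<le> fe x * (flux_density s x / eta_density x)\<^sup>2 / beta s"
proof (cases "curve_density s x = 0")
  case True
  then show ?thesis using fe(2)[of x] beta_pos[OF s] by (simp add: flux_rate_def)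
next
  case False
  define g where "g = flux_density s x / eta_density x"
  have D: "curve_density s x > 0" using curve_density_nonneg[of s x] s False by simp
  have "curve_density s x * (flux_rate s x)\<^sup>2 = (fe x * g)\<^sup>2 / curve_density s x"
    using False by (simp add: flux_rate_def g_def power2_eq_square field_simps)
  also have "\<dots> \<le> fe x * g\<^sup>2 / beta s"
  proof -
    have "(fe x * g)\<^sup>2 * beta s = (fe x * g\<^sup>2) * (beta s * fe x)" by (simp add: power2_eq_square algebra_simps)
    also have "\<dots> \<le> (fe x * g\<^sup>2) * curve_density s x"
      using beta_fe_le_curve_density[of s x] s fe(2)[of x] by (intro mult_left_mono) auto
    finally show ?thesis using D beta_pos[OF s] by (simp add: field_simps)
  qed
  finally show ?thesis by (simp add: g_def)
qed

lemma flux_rate_represents_flux: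
  assumes s: "s \<in> {0<..<1}"
  shows "integrable (curve s) (flux_rate s)"
    and "A \<in> sets borel \<Longrightarrow> sm_val (flux s) A = (\<integral>x\<in>A. flux_rate s x \<partial>curve s)"
proof -
  have s01: "s \<in> {0..1}" using s by auto
  note curve_integral = integrable_density_iff_mult[of "curve_density s" ref, folded curve_def,
      OF _ curve_density_nonneg[OF s01]]
  have "integrable lborel (\<lambda>x. eta_density x * (flux_density s x / eta_density x))"
    using integrable_flux_density[of s] eta_density_pos by (simp add: less_imp_neq[symmetric])
  then have "integrable ref (\<lambda>x. curve_density s x * flux_rate s x)"
    using integral_fe_ref(1)[of "\<lambda>x. flux_density s x / eta_density x"] curve_density_mult_flux_rate[OF s] by simp
  then show "integrable (curve s) (flux_rate s)"
    using curve_integral(1) by (simp add: measurable_ref_eq)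
  assume A: "A \<in> sets borel"
  have "sm_val (flux s) A = (\<integral>x. eta_density x * (indicator A x * (flux_density s x / eta_density x)) \<partial>lborel)"
    unfolding flux_def sm_val_signed_density[OF integrable_flux_density A] set_lebesgue_integral_def
    by (intro Bochner_Integration.integral_cong) (use eta_density_pos in \<open>auto simp: less_imp_neq[symmetric]\<close>)
  also have "\<dots> = (\<integral>x. fe x * (indicator A x * (flux_density s x / eta_density x)) \<partial>ref)"
    by (rule integral_fe_ref(2)[symmetric]) (use A in measurable)
  also have "\<dots> = (\<integral>x. curve_density s x * (indicator A x * flux_rate s x) \<partial>ref)"
    using curve_density_mult_flux_rate[OF s] by (intro Bochner_Integration.integral_cong) (auto simp: indicator_def)
  also have "\<dots> = (\<integral>x\<in>A. flux_rate s x \<partial>curve s)"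
    unfolding set_lebesgue_integral_def using curve_integral(2) A by (simp add: measurable_ref_eq)
  finally show "sm_val (flux s) A = (\<integral>x\<in>A. flux_rate s x \<partial>curve s)" .
qed

definition "Q x = ((G0 x)\<^sup>2 + (G1 x)\<^sup>2) / eta_density x"

lemma borel_measurable_Q [measurable]: "Q \<in> borel_measurable borel"
  unfolding Q_def[abs_def] by measurable

lemma integrable_Q: "integrable lborel Q"
proof (rule integrable_if_powr_decay[of "q / 2 - 1" Q "2 * decay_const\<^sup>2 * powerlaw_norm tail"])
  show "q / 2 - 1 > 1" using q_gt_4 by simp
  fix x
  define r where "r = (1 + \<bar>x\<bar>) powr (1 - q)"
  have sq: "(G0 x)\<^sup>2 \<le> (decay_const * r)\<^sup>2" "(G1 x)\<^sup>2 \<le> (decay_const * r)\<^sup>2"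
    using power_mono[OF abs_G0_le[of x, folded r_def] abs_ge_zero, of 2]
      power_mono[OF abs_G1_le[of x, folded r_def] abs_ge_zero, of 2] by simp_all
  have inv: "1 / eta_density x = powerlaw_norm tail * (1 + \<bar>x\<bar>) powr tail"
    using powerlaw_norm_pos[of tail] tail_gt_5
    by (simp add: eta_density_def powerlaw_density_def powr_minus field_simps)
  have "\<bar>Q x\<bar> = ((G0 x)\<^sup>2 + (G1 x)\<^sup>2) * (1 / eta_density x)"
    using eta_density_pos[of x] by (simp add: Q_def)
  also have "\<dots> \<le> (2 * (decay_const * r)\<^sup>2) * (1 / eta_density x)"
    using sq eta_density_pos[of x] by (intro mult_right_mono) auto
  also have "\<dots> = 2 * decay_const\<^sup>2 * powerlaw_norm tail * (r * r * (1 + \<bar>x\<bar>) powr tail)"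
    unfolding inv by (simp add: power2_eq_square)
  also have "r * r * (1 + \<bar>x\<bar>) powr tail = (1 + \<bar>x\<bar>) powr ((1 - q) + (1 - q) + tail)"
    by (simp only: r_def powr_add)
  also have "(1 - q) + (1 - q) + tail = - (q / 2 - 1)" by (simp add: tail_def field_simps)
  finally show "\<bar>Q x\<bar> \<le> 2 * decay_const\<^sup>2 * powerlaw_norm tail * (1 + \<bar>x\<bar>) powr (- (q / 2 - 1))" .
qed simp

lemma flux_density_sq_le:
  assumes s: "s \<in> {0<..<1}"
  shows "eta_density x * ((flux_density s x / eta_density x)\<^sup>2 / beta s) \<le> 48 * Q x"
proof -
  have b: "beta s > 0" using beta_pos[OF s] .
  have "(flux_density s x)\<^sup>2 \<le> 2 * (alpha' s)\<^sup>2 * (G0 x)\<^sup>2 + 2 * (gamma' s)\<^sup>2 * (G1 x)\<^sup>2"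
    using sum_power2_ge_zero[of "alpha' s * G0 x - gamma' s * G1 x" 0]
    unfolding flux_density_def by (simp add: power2_eq_square algebra_simps)
  also have "\<dots> \<le> 2 * (24 * beta s) * (G0 x)\<^sup>2 + 2 * (24 * beta s) * (G1 x)\<^sup>2"
    using alpha'_sq_le_beta[of s] gamma'_sq_le_beta[of s] s by (intro add_mono mult_right_mono) auto
  finally have "(flux_density s x)\<^sup>2 / beta s \<le> 48 * ((G0 x)\<^sup>2 + (G1 x)\<^sup>2)"
    using b by (simp add: divide_le_eq algebra_simps)
  then show ?thesis
    using eta_density_pos[of x] by (simp add: Q_def power2_eq_square divide_right_mono field_simps)
qed

lemma action_curve_le:
  assumes s: "s \<in> {0<..<1}"
  shows "action (curve s) (flux s) \<le> ennreal (48 * (\<integral>x. Q x \<partial>lborel))"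
proof -
  have s01: "s \<in> {0..1}" using s by auto
  have "action (curve s) (flux s) \<le> (\<integral>\<^sup>+x. ennreal ((flux_rate s x)\<^sup>2) \<partial>curve s)"
    unfolding action_def by (rule INF_lower) (use flux_rate_represents_flux[OF s] in auto)
  also have "\<dots> = (\<integral>\<^sup>+x. ennreal (curve_density s x * (flux_rate s x)\<^sup>2) \<partial>ref)"
    unfolding curve_def using curve_density_nonneg[OF s01]
    by (subst nn_integral_density) (auto simp: measurable_ref_eq ennreal_mult)
  also have "\<dots> \<le> (\<integral>\<^sup>+x. ennreal (fe x) * ennreal ((flux_density s x / eta_density x)\<^sup>2 / beta s) \<partial>ref)"
    using curve_density_mult_flux_rate_sq_le[OF s] beta_pos[OF s] fe(2)
    by (intro nn_integral_mono) (simp add: ennreal_mult[symmetric] ennreal_leI)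
  also have "\<dots> = (\<integral>\<^sup>+x. ennreal (eta_density x) * ennreal ((flux_density s x / eta_density x)\<^sup>2 / beta s) \<partial>lborel)"
    by (rule nn_integral_fe_ref) measurable
  also have "\<dots> \<le> (\<integral>\<^sup>+x. ennreal (48 * Q x) \<partial>lborel)"
    using flux_density_sq_le[OF s] eta_density_pos beta_pos[OF s]
    by (intro nn_integral_mono) (simp add: ennreal_mult[symmetric] ennreal_leI less_imp_le)
  also have "\<dots> = ennreal (\<integral>x. 48 * Q x \<partial>lborel)"
  proof (rule nn_integral_eq_integral)
    show "integrable lborel (\<lambda>x. 48 * Q x)" using integrable_Q by simp
    show "AE x in lborel. 0 \<le> 48 * Q x" using eta_density_pos by (simp add: Q_def less_imp_le)
  qed
  finally show ?thesis by simp
qed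

lemma admissible_curve_flux: "admissible \<mu>0 \<mu>1 curve flux"
  unfolding admissible_def
  using P2c_curve curve_0 curve_1 weakly_continuous_curve fin_borel_signed_density[OF integrable_flux_density]
    borel_measurable_sm_val_flux continuity_equation
  by (simp add: flux_def)

lemma diffusive_sq_finite: "diffusive_sq \<mu>0 \<mu>1 < \<infinity>"
proof -
  let ?C = "ennreal (48 * (\<integral>x. Q x \<partial>lborel))"
  have "diffusive_sq \<mu>0 \<mu>1 \<le> (\<integral>\<^sup>+ s\<in>{0..1}. action (curve s) (flux s) \<partial>lborel)"
    unfolding diffusive_sq_def by (rule INF_lower2[of "(curve, flux)"]) (use admissible_curve_flux in auto)
  also have "\<dots> \<le> (\<integral>\<^sup>+ s. ?C * indicator {0..1::real} s \<partial>lborel)"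
  proof (rule nn_integral_mono_AE)
    have "AE s in lborel. s \<noteq> (0::real)" "AE s in lborel. s \<noteq> (1::real)"
      by (rule AE_lborel_singleton)+
    then show "AE s in lborel. action (curve s) (flux s) * indicator {0..1} s \<le> ?C * indicator {0..1} s"
      by eventually_elim (auto simp: indicator_def intro: action_curve_le)
  qed
  also have "\<dots> = ?C * emeasure lborel {0..1::real}"
    by (rule nn_integral_cmult_indicator) simp
  also have "\<dots> < \<infinity>" by (simp add: ennreal_mult_less_top)
  finally show ?thesis .
qed

end

theorem mainTheorem3:
  fixes \<mu>0 \<mu>1 :: "real measure" and q :: real
  assumes "P2c \<mu>0" and "P2c \<mu>1" and "cx_le \<mu>0 \<mu>1"
    and "q > 4" and "(\<integral>\<^sup>+ x. ennreal (\<bar>x\<bar> powr q) \<partial>\<mu>1) < \<infinity>"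
  shows "diffusive_dist \<mu>0 \<mu>1 < \<infinity>"
proof -
  interpret interpolation \<mu>0 \<mu>1 q using assms by unfold_locales
  show ?thesis using diffusive_sq_finite by (simp add: diffusive_dist_def)
qed

end
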